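(* Let $k=2\kappa+1$ with $\kappa\in\{0,1,2,\dots\}$, and let $C_1,C_2>0$ and $\alpha,\beta>0$ be constants independent of $h$. Then there exist constants $\widetilde C_1,\widetilde C_2>0$ independent of $h$ such that for every $N\ge1$ (with $h=1/N$) and every $1$-periodic $v\in L^2_{\mathrm{loc}}(\mathbb{R})$: (a) if $\max_{1\le i\le N}|(v,\ell_i)|\le C_1h^{\alpha}$, then $\|\pi_1v\|\le\widetilde C_1h^{\alpha-1}$; (b) if $\max_{1\le i\le N,\,1\le m\le k-1}|(v,q_{i,m})|\le C_2h^{\beta}$, then $\|\pi_2 v\|\le\widetilde C_2h^{\beta-1}$.
   Context: For $N\ge1$, $h=1/N$, $x_i=ih$ ($i\in\mathbb{Z}$). $C_p$ is the space of continuous $1$-periodic real functions; $\mathcal{V}_h^k=\{\phi\in C_p:\ \phi|_{[x_{i-1},x_i]}\text{ is a polynomial of degree}\le k,\ i=1,\dots,N\}$. $(\cdot,\cdot)$, $\|\cdot\|$ denote the inner product and norm of $L^2(0,1)$. Let $\mathcal{S}_h^2=\{\phi\in\mathcal{V}_h^k:\phi(x_i)=0\ \text{for all } i\}$, $\mathcal{S}_h^1$ its $L^2(0,1)$-orthogonal complement in $\mathcal{V}_h^k$, and $\pi_1,\pi_2$ the $L^2(0,1)$-orthogonal projections onto $\mathcal{S}_h^1,\mathcal{S}_h^2$. Let $\psi(x)=\frac{1}{k!}\frac{1}{x(1-x)}\frac{d^{k-1}}{dx^{k-1}}[x^{k+1}(1-x)^k]$ (a polynomial of degree $k$ on $[0,1]$).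 For $i=1,\dots,N$, $\ell_i$ is the $1$-periodic function which on one period equals $\psi((x-x_{i-1})/h)$ for $x\in[x_{i-1},x_i]$, $\psi((x_{i+1}-x)/h)$ for $x\in[x_i,x_{i+1}]$, and $0$ on the rest of the period (indices of nodes taken modulo $N$). For $\nu=1,\dots,k-1$ let $\phi_\nu(x)=x(1-x)\binom{k-2}{\nu-1}x^{\nu-1}(1-x)^{k-1-\nu}$ on $[0,1]$, and let $q_{i,\nu}$ be the $1$-periodic function equal to $\phi_\nu((x-x_{i-1})/h)$ on $[x_{i-1},x_i]$ and $0$ on the rest of the period. (For $k=1$ there are no $q_{i,m}$, $\mathcal{S}_h^2=\{0\}$ and (b) is vacuous.) *)

theory Defs
  imports "HOL-Analysis.Analysis" "HOL-Computational_Algebra.Polynomial"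
begin

definition node :: "nat \<Rightarrow> int \<Rightarrow> real" where
  "node N i = real_of_int i / real N"

definition ip :: "(real \<Rightarrow> real) \<Rightarrow> (real \<Rightarrow> real) \<Rightarrow> real" where
  "ip f g = (LINT x:{0..1}|lborel. f x * g x)"

definition l2norm :: "(real \<Rightarrow> real) \<Rightarrow> real" where
  "l2norm f = sqrt (ip f f)"

definition periodic1 :: "(real \<Rightarrow> real) \<Rightarrow> bool" where
  "periodic1 f \<longleftrightarrow> (\<forall>x. f (x + 1) = f x)"

definition Vh :: "nat \<Rightarrow> nat \<Rightarrow> (real \<Rightarrow> real) set" where
  "Vh k N = {\<phi>. continuous_on UNIV \<phi> \<and> periodic1 \<phi> \<and>
      (\<forall>i\<in>{1..N}. \<exists>p :: real poly. degree p \<le> k \<and>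
          (\<forall>x\<in>{node N (int i - 1)..node N (int i)}. \<phi> x = poly p x))}"

definition S2 :: "nat \<Rightarrow> nat \<Rightarrow> (real \<Rightarrow> real) set" where
  "S2 k N = {\<phi> \<in> Vh k N. \<forall>i. \<phi> (node N i) = 0}"

definition S1 :: "nat \<Rightarrow> nat \<Rightarrow> (real \<Rightarrow> real) set" where
  "S1 k N = {\<phi> \<in> Vh k N. \<forall>\<psi>\<in>S2 k N. ip \<phi> \<psi> = 0}"

definition l2proj :: "(real \<Rightarrow> real) set \<Rightarrow> (real \<Rightarrow> real) \<Rightarrow> (real \<Rightarrow> real)" where
  "l2proj S v = (THE p. p \<in> S \<and> (\<forall>w\<in>S. ip (\<lambda>x. v x - p x) w = 0))"

definition pi1 :: "nat \<Rightarrow> nat \<Rightarrow> (real \<Rightarrow> real) \<Rightarrow> (real \<Rightarrow> real)" where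
  "pi1 k N = l2proj (S1 k N)"

definition pi2 :: "nat \<Rightarrow> nat \<Rightarrow> (real \<Rightarrow> real) \<Rightarrow> (real \<Rightarrow> real)" where
  "pi2 k N = l2proj (S2 k N)"

definition psi_poly :: "nat \<Rightarrow> real poly" where
  "psi_poly k = (pderiv ^^ (k - 1)) ([:0, 1:] ^ (k + 1) * [:1, -1:] ^ k)
                   div ([:0, 1:] * [:1, -1:])"

definition psi :: "nat \<Rightarrow> real \<Rightarrow> real" where
  "psi k x = poly (psi_poly k) x / fact k"

definition ell_loc :: "nat \<Rightarrow> nat \<Rightarrow> real \<Rightarrow> real" where
  "ell_loc k N t = (let h = 1 / real N in
      if - h \<le> t \<and> t \<le> 0 then psi k ((t + h) / h)
      else if 0 < t \<and> t \<le> h then psi k ((h - t) / h)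
      else 0)"

definition ell :: "nat \<Rightarrow> nat \<Rightarrow> nat \<Rightarrow> real \<Rightarrow> real" where
  "ell k N i x = infsum (\<lambda>n::int. ell_loc k N (x - node N (int i) - of_int n)) UNIV"

definition phi :: "nat \<Rightarrow> nat \<Rightarrow> real \<Rightarrow> real" where
  "phi k \<nu> x = x * (1 - x) * real ((k - 2) choose (\<nu> - 1)) * x ^ (\<nu> - 1) * (1 - x) ^ (k - 1 - \<nu>)"

definition q_loc :: "nat \<Rightarrow> nat \<Rightarrow> nat \<Rightarrow> real \<Rightarrow> real" where
  "q_loc k N \<nu> t = (let h = 1 / real N in
      if 0 \<le> t \<and> t \<le> h then phi k \<nu> (t / h) else 0)"

definition q :: "nat \<Rightarrow> nat \<Rightarrow> nat \<Rightarrow> nat \<Rightarrow> real \<Rightarrow> real" where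
  "q k N i \<nu> x = infsum (\<lambda>n::int. q_loc k N \<nu> (x - node N (int i - 1) - of_int n)) UNIV"

end

theory Submission
  imports Defs
begin

text \<open>
  Both spaces have explicit local bases. Since \<open>\<psi>\<close> comes from a Rodrigues-type formula,
  \<open>k - 1\<close> integrations by parts show that \<open>\<psi>\<close> is \<open>L\<^sup>2(0,1)\<close>-orthogonal to every polynomial
  of degree \<open>\<le> k\<close> vanishing at \<open>0\<close> and \<open>1\<close>. Hence every \<open>\<ell>\<^sub>i\<close> is orthogonal to \<open>S\<^sub>h\<^sup>2\<close>,
  and a function \<open>s \<in> S\<^sub>h\<^sup>1\<close> coincides with \<open>\<Sum>\<^sub>i s(x\<^sub>i)/\<psi>(1) \<ell>\<^sub>i\<close>, because their difference
  lies in \<open>S\<^sub>h\<^sup>1 \<inter> S\<^sub>h\<^sup>2 = {0}\<close>. On each cell a function of \<open>S\<^sub>h\<^sup>2\<close> is a polynomial vanishing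
  at both end points, hence a combination of the \<open>q\<^sub>i\<^sub>,\<^sub>m\<close>.

  In both cases the coefficients \<open>c\<close> of \<open>p = \<pi> v\<close> are controlled by scaling to the reference
  cell, where all norms on polynomials of degree \<open>\<le> k\<close> are equivalent:
  \<open>\<Sum> c\<^sub>i\<^sup>2 \<le> K h\<^sup>-\<^sup>1 \<parallel>p\<parallel>\<^sup>2\<close>. With \<open>n = O(h\<^sup>-\<^sup>1)\<close> basis functions \<open>g\<^sub>i\<close> this gives
  \<open>\<parallel>p\<parallel>\<^sup>2 = (v, p) = \<Sum> c\<^sub>i (v, g\<^sub>i) \<le> max |(v, g\<^sub>i)| (n \<Sum> c\<^sub>i\<^sup>2)\<^sup>1\<^sup>/\<^sup>2 \<le> K' h\<^sup>-\<^sup>1 max |(v, g\<^sub>i)| \<parallel>p\<parallel>\<close>.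
\<close>

section \<open>Square-integrable functions on [0,1]\<close>

definition L2 :: "(real \<Rightarrow> real) \<Rightarrow> bool" where
  "L2 f \<longleftrightarrow> f \<in> borel_measurable lborel \<and> set_integrable lborel {0..1} (\<lambda>x. (f x)\<^sup>2)"

lemma abs_mult_le_sum_squares: "\<bar>(a::real) * b\<bar> \<le> a\<^sup>2 + b\<^sup>2"
proof -
  have "2 * (\<bar>a\<bar> * \<bar>b\<bar>) \<le> a\<^sup>2 + b\<^sup>2"
    using sum_squares_bound[of "\<bar>a\<bar>" "\<bar>b\<bar>"] by (simp add: mult.assoc)
  moreover have "0 \<le> \<bar>a\<bar> * \<bar>b\<bar>" by simp
  ultimately show ?thesis unfolding abs_mult by linarith
qed

lemma L2_mult_integrable:
  assumes "L2 f" "L2 g" shows "set_integrable lborel {0..1} (\<lambda>x. f x * g x)"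
proof (rule set_integrable_bound)
  show "set_integrable lborel {0..1} (\<lambda>x. (f x)\<^sup>2 + (g x)\<^sup>2)"
    using assms unfolding L2_def by (intro set_integral_add) auto
  show "set_borel_measurable lborel {0..1} (\<lambda>x. f x * g x)"
    using assms unfolding L2_def set_borel_measurable_def
    by (intro borel_measurable_scaleR borel_measurable_indicator borel_measurable_times) auto
  show "AE x in lborel. x \<in> {0..1} \<longrightarrow> norm (f x * g x) \<le> norm ((f x)\<^sup>2 + (g x)\<^sup>2)"
    using abs_mult_le_sum_squares by (intro AE_I2) (auto simp: abs_of_nonneg)
qed

lemma L2_add: assumes "L2 f" "L2 g" shows "L2 (\<lambda>x. f x + g x)"
  unfolding L2_def
proof
  show "(\<lambda>x. f x + g x) \<in> borel_measurable lborel"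
    using assms unfolding L2_def by (intro borel_measurable_add) auto
  have "set_integrable lborel {0..1} (\<lambda>x. (f x)\<^sup>2 + (g x)\<^sup>2 + 2 * (f x * g x))"
    using assms L2_mult_integrable[OF assms] unfolding L2_def
    by (intro set_integral_add set_integrable_mult_right) auto
  then show "set_integrable lborel {0..1} (\<lambda>x. (f x + g x)\<^sup>2)"
    by (simp add: power2_eq_square algebra_simps)
qed

lemma L2_cmult: assumes "L2 f" shows "L2 (\<lambda>x. c * f x)"
  unfolding L2_def
proof
  show "(\<lambda>x. c * f x) \<in> borel_measurable lborel"
    using assms unfolding L2_def by (intro borel_measurable_times) auto
  have "set_integrable lborel {0..1} (\<lambda>x. c\<^sup>2 * (f x)\<^sup>2)"
    using assms unfolding L2_def by (intro set_integrable_mult_right) auto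
  then show "set_integrable lborel {0..1} (\<lambda>x. (c * f x)\<^sup>2)"
    by (simp add: power_mult_distrib)
qed

lemma L2_diff: assumes "L2 f" "L2 g" shows "L2 (\<lambda>x. f x - g x)"
  using L2_add[OF assms(1) L2_cmult[OF assms(2), of "-1"]] by simp

lemma L2_sum:
  assumes "finite I" "\<And>i. i \<in> I \<Longrightarrow> L2 (g i)"
  shows "L2 (\<lambda>x. \<Sum>j\<in>I. c j * g j x)"
  using assms
proof (induction I rule: finite_induct)
  case empty
  then show ?case by (simp add: L2_def set_integrable_def)
next
  case (insert a F)
  then show ?case by (simp add: L2_add L2_cmult)
qed

lemma L2_continuous: assumes "continuous_on UNIV f" shows "L2 f"
  unfolding L2_def
proof
  show "f \<in> borel_measurable lborel"
    using assms by (simp add: borel_measurable_continuous_onI)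
  show "set_integrable lborel {0..1} (\<lambda>x. (f x)\<^sup>2)"
    by (rule borel_integrable_atLeastAtMost')
      (intro continuous_intros continuous_on_subset[OF assms], auto)
qed

lemma ip_commute: "ip f g = ip g f"
  unfolding ip_def by (simp add: mult.commute)

lemma ip_cong:
  assumes "\<And>x. x \<in> {0..1} \<Longrightarrow> f x = f' x" "\<And>x. x \<in> {0..1} \<Longrightarrow> g x = g' x"
  shows "ip f g = ip f' g'"
  unfolding ip_def using assms by (intro set_lebesgue_integral_cong) auto

lemma ip_add_left:
  assumes "L2 f" "L2 g" "L2 h" shows "ip (\<lambda>x. f x + g x) h = ip f h + ip g h"
  unfolding ip_def using L2_mult_integrable[OF assms(1,3)] L2_mult_integrable[OF assms(2,3)]
  by (simp add: distrib_right)

lemma ip_cmult_left: "ip (\<lambda>x. c * f x) h = c * ip f h"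
  unfolding ip_def by (simp add: mult.assoc)

lemma ip_diff_left:
  assumes "L2 f" "L2 g" "L2 h" shows "ip (\<lambda>x. f x - g x) h = ip f h - ip g h"
  using ip_add_left[OF assms(1) L2_cmult[OF assms(2), of "-1"] assms(3)] ip_cmult_left[of "-1" g h]
  by simp

lemma ip_sum_left:
  assumes "finite I" "\<And>i. i \<in> I \<Longrightarrow> L2 (g i)" "L2 h"
  shows "ip (\<lambda>x. \<Sum>j\<in>I. c j * g j x) h = (\<Sum>j\<in>I. c j * ip (g j) h)"
  using assms(1,2)
proof (induction I rule: finite_induct)
  case empty
  then show ?case by (simp add: ip_def)
next
  case (insert a F)
  have "ip (\<lambda>x. \<Sum>j\<in>insert a F. c j * g j x) h
      = ip (\<lambda>x. c a * g a x + (\<Sum>j\<in>F. c j * g j x)) h"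
    using insert by simp
  also have "\<dots> = c a * ip (g a) h + ip (\<lambda>x. \<Sum>j\<in>F. c j * g j x) h"
    using insert assms(3) by (subst ip_add_left) (auto intro: L2_cmult L2_sum simp: ip_cmult_left)
  finally show ?case using insert by simp
qed

lemma ip_sum_right_eq_0:
  assumes "finite I" "\<And>i. i \<in> I \<Longrightarrow> L2 (g i)" "L2 w" "\<And>i. i \<in> I \<Longrightarrow> ip w (g i) = 0"
  shows "ip w (\<lambda>x. \<Sum>j\<in>I. c j * g j x) = 0"
  using assms by (subst ip_commute, subst ip_sum_left) (auto simp: ip_commute)

lemma ip_self_nonneg: "0 \<le> ip f f"
  unfolding ip_def set_lebesgue_integral_def
  by (intro integral_nonneg_AE) (auto simp: indicator_def)

lemma ip_self_diff_cmult:
  assumes "L2 u" "L2 g"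
  shows "ip (\<lambda>x. u x - t * g x) (\<lambda>x. u x - t * g x) = ip u u - 2 * t * ip u g + t\<^sup>2 * ip g g"
proof -
  have tg: "L2 (\<lambda>x. t * g x)" using assms(2) by (rule L2_cmult)
  have "ip (\<lambda>x. u x - t * g x) (\<lambda>x. u x - t * g x)
      = ip u (\<lambda>x. u x - t * g x) - t * ip g (\<lambda>x. u x - t * g x)"
    using assms tg L2_diff by (simp add: ip_diff_left ip_cmult_left)
  also have "ip u (\<lambda>x. u x - t * g x) = ip u u - t * ip u g"
    using assms tg by (subst ip_commute, subst ip_diff_left) (auto simp: ip_cmult_left ip_commute)
  also have "ip g (\<lambda>x. u x - t * g x) = ip g u - t * ip g g"
    using assms tg by (subst ip_commute, subst ip_diff_left) (auto simp: ip_cmult_left ip_commute)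
  finally show ?thesis by (simp add: ip_commute[of g u] power2_eq_square algebra_simps)
qed

lemma ip_eq_0_if_self_eq_0:
  assumes "L2 u" "L2 g" "ip g g = 0" shows "ip u g = 0"
proof (rule ccontr)
  assume nz: "ip u g \<noteq> 0"
  define t where "t = (ip u u + 1) / (2 * ip u g)"
  have "0 \<le> ip (\<lambda>x. u x - t * g x) (\<lambda>x. u x - t * g x)" by (rule ip_self_nonneg)
  also have "\<dots> = ip u u - 2 * t * ip u g" using ip_self_diff_cmult[OF assms(1,2)] assms(3) by simp
  also have "\<dots> = -1" using nz by (simp add: t_def field_simps)
  finally show False by simp
qed

lemma ip_pythagoras:
  assumes "L2 f" "L2 u" "ip f u = 0"
  shows "ip (\<lambda>x. c * f x + u x) (\<lambda>x. c * f x + u x) = c\<^sup>2 * ip f f + ip u u"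
proof -
  let ?w = "\<lambda>x. c * f x + u x"
  have cf: "L2 (\<lambda>x. c * f x)" using assms(1) by (rule L2_cmult)
  have lin: "ip ?w h = c * ip f h + ip u h" if "L2 h" for h
    using cf assms(2) that by (simp add: ip_add_left ip_cmult_left)
  have "ip ?w ?w = c * ip f ?w + ip u ?w" using lin L2_add[OF cf assms(2)] by simp
  also have "ip f ?w = c * ip f f"
    using lin[OF assms(1)] assms(3) by (simp add: ip_commute[of f ?w] ip_commute[of u f])
  also have "ip u ?w = ip u u"
    using lin[OF assms(2)] assms(3) by (simp add: ip_commute[of u ?w])
  finally show ?thesis by (simp add: power2_eq_square)
qed

text \<open>With \<open>x / 0 = 0\<close>, the coefficient below is also correct when \<open>g\<close> vanishes in \<open>L\<^sup>2\<close>.\<close>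

lemma ip_residual_orthogonal:
  assumes "L2 r" "L2 g"
  shows "ip (\<lambda>x. r x - ip r g / ip g g * g x) g = 0"
proof (cases "ip g g = 0")
  case True
  then show ?thesis using ip_eq_0_if_self_eq_0[OF assms] by (simp add: ip_def)
next
  case False
  define t where "t = ip r g / ip g g"
  have "ip (\<lambda>x. r x - t * g x) g = ip r g - t * ip g g"
    using assms by (simp add: ip_diff_left L2_cmult ip_cmult_left)
  then show ?thesis using False by (simp add: t_def)
qed

lemma ex_orthogonal_projection_coeffs:
  assumes "finite I" "\<And>i. i \<in> I \<Longrightarrow> L2 (g i)" "L2 v"
  shows "\<exists>c. \<forall>i\<in>I. ip (\<lambda>x. v x - (\<Sum>j\<in>I. c j * g j x)) (g i) = 0"
  using assms
proof (induction I arbitrary: v rule: finite_induct)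
  case empty
  then show ?case by simp
next
  case (insert a F)
  have gF: "\<And>i. i \<in> F \<Longrightarrow> L2 (g i)" and ga: "L2 (g a)" using insert by auto
  obtain d where d: "\<forall>i\<in>F. ip (\<lambda>x. g a x - (\<Sum>j\<in>F. d j * g j x)) (g i) = 0"
    using insert.IH[OF gF ga] by blast
  obtain e where e: "\<forall>i\<in>F. ip (\<lambda>x. v x - (\<Sum>j\<in>F. e j * g j x)) (g i) = 0"
    using insert.IH[OF gF insert.prems(2)] by blast
  define g' where "g' = (\<lambda>x. g a x - (\<Sum>j\<in>F. d j * g j x))"
  define r where "r = (\<lambda>x. v x - (\<Sum>j\<in>F. e j * g j x))"
  define t where "t = ip r g' / ip g' g'"
  define c where "c = (\<lambda>j. if j = a then t else e j - t * d j)"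
  have Lg': "L2 g'" and Lr: "L2 r"
    unfolding g'_def r_def using gF ga insert by (auto intro!: L2_diff L2_sum)
  have Lres: "L2 (\<lambda>x. r x - t * g' x)" using Lr Lg' by (intro L2_diff L2_cmult)
  have res: "v x - (\<Sum>j\<in>insert a F. c j * g j x) = r x - t * g' x" for x
  proof -
    have "(\<Sum>j\<in>insert a F. c j * g j x) = t * g a x + (\<Sum>j\<in>F. (e j - t * d j) * g j x)"
      using insert(1,2) by (simp add: c_def) (intro sum.cong, auto)
    then show ?thesis
      by (simp add: r_def g'_def algebra_simps sum_subtractf sum_distrib_left)
  qed
  have orth_F: "ip (\<lambda>x. r x - t * g' x) (g i) = 0" if "i \<in> F" for i
    using d e that Lr Lg' gF by (simp add: ip_diff_left L2_cmult ip_cmult_left r_def g'_def)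
  have orth_g': "ip (\<lambda>x. r x - t * g' x) g' = 0"
    unfolding t_def by (rule ip_residual_orthogonal[OF Lr Lg'])
  have "ip (\<lambda>x. r x - t * g' x) (g a)
      = ip (\<lambda>x. r x - t * g' x) (\<lambda>x. 1 * g' x + (\<Sum>j\<in>F. d j * g j x))"
    by (rule ip_cong) (simp_all add: g'_def)
  also have "\<dots> = 0"
    using orth_g' ip_sum_right_eq_0[OF insert(1) gF Lres orth_F] Lg' Lres gF insert(1)
    by (subst (1) ip_commute, subst ip_add_left)
      (auto intro: L2_sum L2_cmult simp: ip_commute ip_cmult_left)
  finally have orth_a: "ip (\<lambda>x. r x - t * g' x) (g a) = 0" .
  show ?case
    by (rule exI[of _ c]) (use orth_F orth_a res in auto)
qed

lemma ip_continuous_eq_integral: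
  assumes "continuous_on UNIV f" "continuous_on UNIV g"
  shows "ip f g = integral {0..1} (\<lambda>x. f x * g x)"
proof -
  have "continuous_on {0..1} (\<lambda>x. f x * g x)"
    by (intro continuous_intros continuous_on_subset[OF assms(1)] continuous_on_subset[OF assms(2)])
      auto
  then show ?thesis unfolding ip_def
    by (intro set_borel_integral_eq_integral borel_integrable_atLeastAtMost')
qed

lemma continuous_ip_self_eq_0_imp:
  assumes "continuous_on UNIV f" "ip f f = 0" "x \<in> {0..1}" shows "f x = 0"
proof -
  have "integral {0..1} (\<lambda>x. (f x)\<^sup>2) = 0"
    using ip_continuous_eq_integral[OF assms(1) assms(1)] assms(2) by (simp add: power2_eq_square)
  moreover have "continuous_on {0..1} (\<lambda>x. (f x)\<^sup>2)"
    by (intro continuous_intros continuous_on_subset[OF assms(1)]) auto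
  ultimately show ?thesis
    using integral_eq_0_iff[of 0 1 "\<lambda>x. (f x)\<^sup>2"] assms(3) by auto
qed

text \<open>The coefficients need not be unique, as the \<open>g j\<close> may be linearly dependent on \<open>[0,1]\<close>.\<close>

definition stable_coeffs :: "'i set \<Rightarrow> ('i \<Rightarrow> real \<Rightarrow> real) \<Rightarrow> real \<Rightarrow> bool" where
  "stable_coeffs I g K \<longleftrightarrow> (\<forall>a. \<exists>c. (\<forall>x\<in>{0..1}. (\<Sum>j\<in>I. c j * g j x) = (\<Sum>j\<in>I. a j * g j x)) \<and>
     (\<Sum>j\<in>I. (c j)\<^sup>2) \<le> K * ip (\<lambda>x. \<Sum>j\<in>I. a j * g j x) (\<lambda>x. \<Sum>j\<in>I. a j * g j x))"

lemma stable_coeffs_insert_dependent: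
  assumes "stable_coeffs F g K" "finite F" "i0 \<notin> F"
    and dep: "\<And>x. x \<in> {0..1} \<Longrightarrow> g i0 x = (\<Sum>j\<in>F. d j * g j x)"
  shows "stable_coeffs (insert i0 F) g K"
  unfolding stable_coeffs_def
proof
  fix a
  define a' where "a' = (\<lambda>j. a j + a i0 * d j)"
  have eq: "(\<Sum>j\<in>insert i0 F. a j * g j x) = (\<Sum>j\<in>F. a' j * g j x)" if "x \<in> {0..1}" for x
    using assms(2,3) dep[OF that] by (simp add: a'_def algebra_simps sum.distrib sum_distrib_left)
  obtain c where c1: "\<forall>x\<in>{0..1}. (\<Sum>j\<in>F. c j * g j x) = (\<Sum>j\<in>F. a' j * g j x)"
    and c2: "(\<Sum>j\<in>F. (c j)\<^sup>2) \<le> K * ip (\<lambda>x. \<Sum>j\<in>F. a' j * g j x) (\<lambda>x. \<Sum>j\<in>F. a' j * g j x)"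
    using assms(1) unfolding stable_coeffs_def by blast
  have "ip (\<lambda>x. \<Sum>j\<in>F. a' j * g j x) (\<lambda>x. \<Sum>j\<in>F. a' j * g j x)
      = ip (\<lambda>x. \<Sum>j\<in>insert i0 F. a j * g j x) (\<lambda>x. \<Sum>j\<in>insert i0 F. a j * g j x)"
    by (intro ip_cong) (simp_all add: eq)
  moreover have "(\<Sum>j\<in>insert i0 F. (c(i0 := 0)) j * g j x) = (\<Sum>j\<in>F. c j * g j x)" for x
    using assms(2,3) by (auto intro!: sum.cong)
  moreover have "(\<Sum>j\<in>insert i0 F. ((c(i0 := 0)) j)\<^sup>2) = (\<Sum>j\<in>F. (c j)\<^sup>2)"
    using assms(2,3) by (auto intro!: sum.cong)
  ultimately show "\<exists>c. (\<forall>x\<in>{0..1}. (\<Sum>j\<in>insert i0 F. c j * g j x) = (\<Sum>j\<in>insert i0 F. a j * g j x)) \<and>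
      (\<Sum>j\<in>insert i0 F. (c j)\<^sup>2) \<le> K * ip (\<lambda>x. \<Sum>j\<in>insert i0 F. a j * g j x) (\<lambda>x. \<Sum>j\<in>insert i0 F. a j * g j x)"
    using c1 c2 eq by (intro exI[of _ "c(i0 := 0)"]) auto
qed

lemma sum_squares_diff_le:
  fixes c d :: "'i \<Rightarrow> real"
  shows "(\<Sum>j\<in>F. (c j - a * d j)\<^sup>2) \<le> 2 * (\<Sum>j\<in>F. (c j)\<^sup>2) + 2 * a\<^sup>2 * (\<Sum>j\<in>F. (d j)\<^sup>2)"
proof -
  have "(x - y)\<^sup>2 \<le> 2 * x\<^sup>2 + 2 * y\<^sup>2" for x y :: real
    using zero_le_power2[of "x + y"] by (simp add: power2_eq_square algebra_simps)
  then have "(\<Sum>j\<in>F. (c j - a * d j)\<^sup>2) \<le> (\<Sum>j\<in>F. 2 * (c j)\<^sup>2 + 2 * (a * d j)\<^sup>2)"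
    by (intro sum_mono)
  then show ?thesis by (simp add: sum.distrib sum_distrib_left power_mult_distrib mult.assoc)
qed

lemma stable_coeffs_insert_orthogonal:
  assumes "stable_coeffs F g K" "K \<ge> 0" "finite F" "i0 \<notin> F"
    and L2: "\<And>j. j \<in> F \<Longrightarrow> L2 (g j)" "L2 g'"
    and orth: "\<And>j. j \<in> F \<Longrightarrow> ip g' (g j) = 0" and pos: "ip g' g' > 0"
    and decomp: "\<And>x. g i0 x = g' x + (\<Sum>j\<in>F. d j * g j x)"
  shows "stable_coeffs (insert i0 F) g (max ((1 + 2 * (\<Sum>j\<in>F. (d j)\<^sup>2)) / ip g' g') (2 * K))"
    (is "stable_coeffs _ _ ?K")
  unfolding stable_coeffs_def
proof
  fix a
  define a' where "a' = (\<lambda>j. a j + a i0 * d j)"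
  define u where "u = (\<lambda>x. \<Sum>j\<in>F. a' j * g j x)"
  define w where "w = (\<lambda>x. \<Sum>j\<in>insert i0 F. a j * g j x)"
  have wu: "w x = a i0 * g' x + u x" for x
    using assms(3,4) unfolding w_def u_def a'_def
    by (simp add: decomp algebra_simps sum.distrib sum_distrib_left)
  have ipw: "ip w w = (a i0)\<^sup>2 * ip g' g' + ip u u"
    unfolding wu[abs_def] u_def
    using L2 orth assms(3) by (intro ip_pythagoras ip_sum_right_eq_0 L2_sum) auto
  obtain c' where c'1: "\<forall>x\<in>{0..1}. (\<Sum>j\<in>F. c' j * g j x) = u x"
    and c'2: "(\<Sum>j\<in>F. (c' j)\<^sup>2) \<le> K * ip u u"
    using assms(1) unfolding u_def stable_coeffs_def by blast
  define c where "c = (\<lambda>j. if j = i0 then a i0 else c' j - a i0 * d j)"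
  have "(\<Sum>j\<in>insert i0 F. c j * g j x) = a i0 * g i0 x + (\<Sum>j\<in>F. (c' j - a i0 * d j) * g j x)" for x
    using assms(3,4) unfolding c_def by (simp, intro sum.cong) auto
  then have s1: "(\<Sum>j\<in>insert i0 F. c j * g j x) = w x" if "x \<in> {0..1}" for x
    using c'1 that by (simp add: wu decomp algebra_simps sum_subtractf sum_distrib_left)
  have "(\<Sum>j\<in>insert i0 F. (c j)\<^sup>2) = (a i0)\<^sup>2 + (\<Sum>j\<in>F. (c' j - a i0 * d j)\<^sup>2)"
    using assms(3,4) unfolding c_def by (simp, intro sum.cong) auto
  also have "\<dots> \<le> (a i0)\<^sup>2 * (1 + 2 * (\<Sum>j\<in>F. (d j)\<^sup>2)) + 2 * (\<Sum>j\<in>F. (c' j)\<^sup>2)"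
    using sum_squares_diff_le[where F = F and c = c' and a = "a i0" and d = d]
    by (simp add: algebra_simps)
  also have "\<dots> \<le> (1 + 2 * (\<Sum>j\<in>F. (d j)\<^sup>2)) / ip g' g' * ((a i0)\<^sup>2 * ip g' g') + 2 * K * ip u u"
    using c'2 pos by simp
  also have "\<dots> \<le> ?K * ((a i0)\<^sup>2 * ip g' g') + ?K * ip u u"
    using pos ip_self_nonneg[of u] by (intro add_mono mult_right_mono) auto
  also have "\<dots> = ?K * ip w w" using ipw by (simp add: algebra_simps)
  finally show "\<exists>c. (\<forall>x\<in>{0..1}. (\<Sum>j\<in>insert i0 F. c j * g j x) = (\<Sum>j\<in>insert i0 F. a j * g j x)) \<and>
      (\<Sum>j\<in>insert i0 F. (c j)\<^sup>2) \<le> ?K * ip (\<lambda>x. \<Sum>j\<in>insert i0 F. a j * g j x) (\<lambda>x. \<Sum>j\<in>insert i0 F. a j * g j x)"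
    using s1 unfolding w_def by (intro exI[of _ c]) auto
qed

lemma ex_stable_coeffs:
  assumes "finite I" "\<And>i. i \<in> I \<Longrightarrow> continuous_on UNIV (g i)"
  shows "\<exists>K\<ge>0. stable_coeffs I g K"
  using assms
proof (induction I rule: finite_induct)
  case empty
  show ?case by (rule exI[of _ 0]) (simp add: stable_coeffs_def)
next
  case (insert i0 F)
  have cF: "\<And>i. i \<in> F \<Longrightarrow> continuous_on UNIV (g i)" and ci0: "continuous_on UNIV (g i0)"
    using insert.prems by auto
  have gF: "\<And>i. i \<in> F \<Longrightarrow> L2 (g i)" using cF L2_continuous by blast
  obtain K where K: "K \<ge> 0" "stable_coeffs F g K" using insert.IH[OF cF] by blast
  obtain d where d: "\<forall>i\<in>F. ip (\<lambda>x. g i0 x - (\<Sum>j\<in>F. d j * g j x)) (g i) = 0"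
    using ex_orthogonal_projection_coeffs[of F g "g i0", OF insert(1) gF L2_continuous[OF ci0]] by blast
  define g' where "g' = (\<lambda>x. g i0 x - (\<Sum>j\<in>F. d j * g j x))"
  have cg': "continuous_on UNIV g'" unfolding g'_def using ci0 cF by (intro continuous_intros) auto
  show ?case
  proof (cases "ip g' g' = 0")
    case True
    then have "g i0 x = (\<Sum>j\<in>F. d j * g j x)" if "x \<in> {0..1}" for x
      using continuous_ip_self_eq_0_imp[OF cg' True that] by (simp add: g'_def)
    then show ?thesis
      using stable_coeffs_insert_dependent[OF K(2) insert(1,2)] K(1) by blast
  next
    case False
    then have pos: "ip g' g' > 0" using ip_self_nonneg[of g'] by linarith
    have orth: "\<And>j. j \<in> F \<Longrightarrow> ip g' (g j) = 0" using d by (simp add: g'_def)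
    have decomp: "\<And>x. g i0 x = g' x + (\<Sum>j\<in>F. d j * g j x)" by (simp add: g'_def)
    let ?K = "max ((1 + 2 * (\<Sum>j\<in>F. (d j)\<^sup>2)) / ip g' g') (2 * K)"
    have "?K \<ge> 0" using K(1) by (simp add: le_max_iff_disj)
    then show ?thesis
      using stable_coeffs_insert_orthogonal[OF K(2,1) insert(1,2) gF L2_continuous[OF cg'] orth pos
          decomp] by blast
  qed
qed

section \<open>Orthogonal projections onto finitely spanned spaces\<close>

lemma periodic1_add_int:
  assumes "periodic1 f" shows "f (x + of_int m) = f x"
proof -
  have pos: "f (x + of_nat n) = f x" for x n
    by (induction n arbitrary: x) (use assms in \<open>auto simp: periodic1_def add.assoc[symmetric]\<close>)
  show ?thesis
  proof (cases "m \<ge> 0")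
    case True
    then show ?thesis using pos[of x "nat m"] by simp
  next
    case False
    have "f (x + of_int m + of_nat (nat (-m))) = f (x + of_int m)" by (rule pos)
    moreover have "x + of_int m + of_nat (nat (-m)) = x" using False by simp
    ultimately show ?thesis by simp
  qed
qed

lemma periodic1_eq_0_if_eq_0_on_01:
  assumes "periodic1 f" "\<And>x. x \<in> {0..1} \<Longrightarrow> f x = 0" shows "f x = 0"
proof -
  have "f x = f (frac x + of_int \<lfloor>x\<rfloor>)" by (simp add: frac_def)
  also have "\<dots> = f (frac x)" by (rule periodic1_add_int[OF assms(1)])
  also have "\<dots> = 0" using assms(2) frac_lt_1[of x] by (simp add: less_imp_le)
  finally show ?thesis .
qed

lemma l2proj_eqI:
  assumes S: "\<And>f. f \<in> S \<Longrightarrow> continuous_on UNIV f \<and> periodic1 f"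
    "\<And>f g. f \<in> S \<Longrightarrow> g \<in> S \<Longrightarrow> (\<lambda>x. f x - g x) \<in> S"
    and "p \<in> S" "\<forall>w\<in>S. ip (\<lambda>x. v x - p x) w = 0" "L2 v"
  shows "l2proj S v = p"
  unfolding l2proj_def
proof (rule the_equality)
  show "p \<in> S \<and> (\<forall>w\<in>S. ip (\<lambda>x. v x - p x) w = 0)" using assms(3,4) by blast
  fix p' assume p': "p' \<in> S \<and> (\<forall>w\<in>S. ip (\<lambda>x. v x - p' x) w = 0)"
  define d where "d = (\<lambda>x. p' x - p x)"
  have dS: "d \<in> S" unfolding d_def using S(2) assms(3) p' by blast
  have Lp: "L2 p" "L2 p'" using S(1) assms(3) p' L2_continuous by blast+
  have Ld: "L2 d" using S(1)[OF dS] L2_continuous by blast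
  have "ip d d = ip (\<lambda>x. (v x - p x) - (v x - p' x)) d" by (simp add: d_def)
  also have "\<dots> = ip (\<lambda>x. v x - p x) d - ip (\<lambda>x. v x - p' x) d"
    using Lp assms(5) Ld by (intro ip_diff_left L2_diff) auto
  also have "\<dots> = 0" using assms(4) p' dS by simp
  finally have "d x = 0" if "x \<in> {0..1}" for x
    using continuous_ip_self_eq_0_imp S(1)[OF dS] that by blast
  then have "d x = 0" for x using periodic1_eq_0_if_eq_0_on_01 S(1)[OF dS] by blast
  then show "p' = p" unfolding d_def by (auto simp: fun_eq_iff)
qed

lemma l2proj_finite_span:
  assumes S: "\<And>f. f \<in> S \<Longrightarrow> continuous_on UNIV f \<and> periodic1 f"
    "\<And>f g. f \<in> S \<Longrightarrow> g \<in> S \<Longrightarrow> (\<lambda>x. f x - g x) \<in> S"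
    and "finite I" "\<And>i. i \<in> I \<Longrightarrow> g i \<in> S" "\<And>c. (\<lambda>x. \<Sum>j\<in>I. c j * g j x) \<in> S"
    and span: "\<And>w. w \<in> S \<Longrightarrow> \<exists>e. \<forall>x\<in>{0..1}. w x = (\<Sum>j\<in>I. e j * g j x)"
    and "L2 v"
  shows "l2proj S v \<in> S \<and> ip v (l2proj S v) = ip (l2proj S v) (l2proj S v)"
proof -
  have Lg: "\<And>i. i \<in> I \<Longrightarrow> L2 (g i)" using S(1) assms(4) L2_continuous by blast
  obtain c where c: "\<forall>i\<in>I. ip (\<lambda>x. v x - (\<Sum>j\<in>I. c j * g j x)) (g i) = 0"
    using ex_orthogonal_projection_coeffs[of I g v, OF assms(3) Lg assms(7)] by blast
  define p where "p = (\<lambda>x. \<Sum>j\<in>I. c j * g j x)"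
  have pS: "p \<in> S" unfolding p_def by (rule assms(5))
  have Lp: "L2 p" using S(1)[OF pS] L2_continuous by blast
  have Lr: "L2 (\<lambda>x. v x - p x)" using assms(7) Lp by (rule L2_diff)
  have orth: "\<forall>w\<in>S. ip (\<lambda>x. v x - p x) w = 0"
  proof
    fix w assume "w \<in> S"
    then obtain e where e: "\<forall>x\<in>{0..1}. w x = (\<Sum>j\<in>I. e j * g j x)" using span by blast
    have "ip (\<lambda>x. v x - p x) w = ip (\<lambda>x. v x - p x) (\<lambda>x. \<Sum>j\<in>I. e j * g j x)"
      by (rule ip_cong) (use e in auto)
    also have "\<dots> = 0"
      by (rule ip_sum_right_eq_0[OF assms(3) Lg Lr]) (use c in \<open>auto simp: p_def\<close>)
    finally show "ip (\<lambda>x. v x - p x) w = 0" .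
  qed
  have proj: "l2proj S v = p" by (rule l2proj_eqI[OF S pS orth assms(7)])
  have "ip (\<lambda>x. v x - p x) p = 0" using orth pS by blast
  then show ?thesis using ip_diff_left[OF assms(7) Lp Lp] proj pS by simp
qed

lemma sqrt_le_of_le_mult:
  fixes X B S M :: real
  assumes "X \<ge> 0" "X \<le> B * S" "S\<^sup>2 \<le> M * X" "B \<ge> 0" "M \<ge> 0"
  shows "sqrt X \<le> B * sqrt M"
proof (cases "X = 0")
  case True
  then show ?thesis using assms by simp
next
  case False
  then have X0: "X > 0" using assms(1) by simp
  have "X\<^sup>2 \<le> (B * S)\<^sup>2" using assms(1,2) by (intro power_mono) auto
  also have "\<dots> \<le> B\<^sup>2 * (M * X)" using assms(3) by (simp add: power_mult_distrib mult_left_mono)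
  finally have "X \<le> B\<^sup>2 * M" using X0 by (simp add: power2_eq_square algebra_simps)
  then have "sqrt X \<le> sqrt (B\<^sup>2 * M)" by (rule real_sqrt_le_mono)
  also have "\<dots> = B * sqrt M" using assms(4) by (simp add: real_sqrt_mult)
  finally show ?thesis .
qed

lemma l2norm_le_of_expansion:
  assumes "finite I" "\<And>i. i \<in> I \<Longrightarrow> L2 (g i)" "L2 v" "ip v p = ip p p"
    "\<forall>x\<in>{0..1}. p x = (\<Sum>i\<in>I. d i * g i x)" "\<And>i. i \<in> I \<Longrightarrow> \<bar>ip v (g i)\<bar> \<le> B"
    "(\<Sum>i\<in>I. (d i)\<^sup>2) * real (card I) \<le> M * ip p p" "B \<ge> 0" "M \<ge> 0"
  shows "l2norm p \<le> B * sqrt M"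
  unfolding l2norm_def
proof (rule sqrt_le_of_le_mult[OF ip_self_nonneg _ _ assms(8,9)])
  have "ip v p = ip v (\<lambda>x. \<Sum>i\<in>I. d i * g i x)" by (rule ip_cong) (use assms(5) in auto)
  also have "\<dots> = (\<Sum>i\<in>I. d i * ip v (g i))"
    using assms(1-3) by (subst ip_commute, subst ip_sum_left) (auto simp: ip_commute)
  finally have "ip p p = (\<Sum>i\<in>I. d i * ip v (g i))" using assms(4) by simp
  also have "\<dots> \<le> (\<Sum>i\<in>I. \<bar>d i * ip v (g i)\<bar>)" by (rule sum_mono) simp
  also have "\<dots> \<le> (\<Sum>i\<in>I. \<bar>d i\<bar> * B)"
    using assms(6) by (intro sum_mono) (simp add: abs_mult mult_left_mono)
  also have "\<dots> = B * (\<Sum>i\<in>I. \<bar>d i\<bar>)" by (simp add: sum_distrib_left mult.commute)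
  finally show "ip p p \<le> B * (\<Sum>i\<in>I. \<bar>d i\<bar>)" .
  have "(\<Sum>i\<in>I. \<bar>d i\<bar>)\<^sup>2 \<le> (\<Sum>i\<in>I. \<bar>d i\<bar>\<^sup>2) * real (card I)"
    by (rule sum_squared_le_sum_of_squares)
  then show "(\<Sum>i\<in>I. \<bar>d i\<bar>)\<^sup>2 \<le> M * ip p p" using assms(7) by simp
qed

section \<open>The reference profiles \<open>\<psi>\<close> and \<open>\<phi>\<close>\<close>

lemma integral_01_poly_pderiv: "integral {0..1} (\<lambda>x. poly (pderiv C) x) = poly C 1 - poly C (0::real)"
proof -
  have "((\<lambda>x. poly (pderiv C) x) has_integral (poly C 1 - poly C 0)) {0..1::real}"
    by (rule fundamental_theorem_of_calculus)
      (auto intro!: has_field_derivative_at_within[OF poly_DERIV]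
        simp flip: has_real_derivative_iff_has_vector_derivative)
  then show ?thesis by (rule integral_unique)
qed

lemma integral_01_pderiv_mult_poly:
  fixes A B :: "real poly"
  shows "integral {0..1} (\<lambda>x. poly (pderiv A) x * poly B x) =
    poly A 1 * poly B 1 - poly A 0 * poly B 0 - integral {0..1} (\<lambda>x. poly A x * poly (pderiv B) x)"
proof -
  have "integral {0..1} (\<lambda>x. poly (pderiv (A * B)) x) =
     integral {0..1} (\<lambda>x. poly (A * pderiv B) x) + integral {0..1} (\<lambda>x. poly (B * pderiv A) x)"
    by (simp add: pderiv_mult, rule integral_add)
      (auto intro!: integrable_continuous_interval continuous_intros)
  then show ?thesis by (simp add: integral_01_poly_pderiv mult.commute)
qed

lemma pderiv_linear_power_mult:
  fixes R :: "real poly"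
  shows "pderiv ([:-a,1:]^(Suc n) * R) = [:-a,1:]^n * (smult (of_nat (Suc n)) R + [:-a,1:] * pderiv R)"
proof -
  have d: "pderiv [:-a,1:] = (1::real poly)" by (simp add: pderiv_pCons one_pCons)
  show ?thesis by (simp only: pderiv_mult pderiv_power_Suc d) (simp add: algebra_simps)
qed

lemma higher_pderiv_linear_power_mult:
  fixes R :: "real poly"
  assumes "poly R a \<noteq> 0" "j \<le> n"
  shows "\<exists>Rj. (pderiv ^^ j) ([:-a,1:]^n * R) = [:-a,1:]^(n - j) * Rj \<and> poly Rj a \<noteq> 0"
  using assms(2)
proof (induction j)
  case 0
  then show ?case using assms(1) by auto
next
  case (Suc j)
  then obtain Rj where Rj: "(pderiv ^^ j) ([:-a,1:]^n * R) = [:-a,1:]^(n - j) * Rj" "poly Rj a \<noteq> 0"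
    by auto
  obtain m where m: "n - j = Suc m" using Suc.prems by (metis Suc_diff_Suc Suc_le_lessD)
  have "(pderiv ^^ Suc j) ([:-a,1:]^n * R) = pderiv ([:-a,1:]^(Suc m) * Rj)" using Rj m by simp
  also have "\<dots> = [:-a,1:]^m * (smult (of_nat (Suc m)) Rj + [:-a,1:] * pderiv Rj)"
    by (rule pderiv_linear_power_mult)
  moreover have "n - Suc j = m" using m by arith
  moreover have "poly (smult (of_nat (Suc m)) Rj + [:-a,1:] * pderiv Rj) a \<noteq> 0"
    using Rj(2) by simp
  ultimately show ?case
    by (intro exI[of _ "smult (of_nat (Suc m)) Rj + [:-a,1:] * pderiv Rj"]) simp
qed

definition rodrigues_poly :: "nat \<Rightarrow> real poly" where
  "rodrigues_poly k = [:0, 1:] ^ (k + 1) * [:1, -1:] ^ k"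

lemma higher_pderiv_rodrigues_poly_at_0:
  assumes "j \<le> k + 1"
  shows "\<exists>R. (pderiv ^^ j) (rodrigues_poly k) = [:-0,1:]^(k + 1 - j) * R \<and> poly R 0 \<noteq> 0"
proof -
  have "rodrigues_poly k = [:-0,1:]^(k+1) * [:1,-1:]^k" unfolding rodrigues_poly_def by simp
  then show ?thesis by (simp only:) (rule higher_pderiv_linear_power_mult, use assms in auto)
qed

lemma higher_pderiv_rodrigues_poly_at_1:
  assumes "j \<le> k"
  shows "\<exists>R. (pderiv ^^ j) (rodrigues_poly k) = [:-1,1:]^(k - j) * R \<and> poly R 1 \<noteq> 0"
proof -
  have "[:1,-1:]^k = smult ((-1)^k) ([:-1,1::real:]^k)"
    by (simp flip: smult_power)
  then have "rodrigues_poly k = [:-1,1:]^k * smult ((-1)^k) ([:0,1:]^(k+1))"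
    unfolding rodrigues_poly_def by (simp add: algebra_simps)
  then show ?thesis by (simp only:) (rule higher_pderiv_linear_power_mult, use assms in auto)
qed

lemma higher_pderiv_rodrigues_poly_vanishes:
  assumes "j < k"
  shows "poly ((pderiv ^^ j) (rodrigues_poly k)) 0 = 0" "poly ((pderiv ^^ j) (rodrigues_poly k)) 1 = 0"
proof -
  obtain R where "(pderiv ^^ j) (rodrigues_poly k) = [:-0,1:]^(k + 1 - j) * R"
    using higher_pderiv_rodrigues_poly_at_0[of j k] assms by auto
  moreover have "k + 1 - j = Suc (k - j)" using assms by auto
  ultimately show "poly ((pderiv ^^ j) (rodrigues_poly k)) 0 = 0" by simp
  obtain R where "(pderiv ^^ j) (rodrigues_poly k) = [:-1,1:]^(k - j) * R"
    using higher_pderiv_rodrigues_poly_at_1[of j k] assms by auto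
  moreover have "k - j = Suc (k - j - 1)" using assms by auto
  ultimately show "poly ((pderiv ^^ j) (rodrigues_poly k)) 1 = 0" by simp
qed

lemma psi_poly_factorization:
  assumes "k \<ge> 1"
  shows "(pderiv ^^ (k - 1)) (rodrigues_poly k) = [:0,1:] * [:1,-1:] * psi_poly k"
    and "poly (psi_poly k) 0 = 0" "poly (psi_poly k) 1 \<noteq> 0"
proof -
  define P where "P = (pderiv ^^ (k - 1)) (rodrigues_poly k)"
  have e: "k + 1 - (k - 1) = 2" "k - (k - 1) = 1" using assms by auto
  have "k - 1 \<le> k + 1" by simp
  then obtain R0 where "P = [:-0,1:]^(k + 1 - (k - 1)) * R0"
    using higher_pderiv_rodrigues_poly_at_0 unfolding P_def by blast
  then have R0: "P = [:-0,1:]^2 * R0" by (simp only: e)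
  obtain R1 where "P = [:-1,1:]^(k - (k - 1)) * R1" "poly R1 1 \<noteq> 0"
    using higher_pderiv_rodrigues_poly_at_1[of "k - 1" k] unfolding P_def by auto
  then have R1: "P = [:-1,1:] * R1" "poly R1 1 \<noteq> 0" using e by (metis power_one_right)+
  have "poly P 1 = 0" unfolding P_def using higher_pderiv_rodrigues_poly_vanishes[of "k - 1" k] assms by auto
  then have "poly R0 1 = 0" using R0 by simp
  then obtain Q where Q: "R0 = [:-1,1:] * Q" using poly_eq_0_iff_dvd[of R0 1] by (auto elim: dvdE)
  have "[:-1,1:] * R1 = [:-1,1:] * ([:0,1:]^2 * Q)" using R0 R1(1) Q by (simp add: algebra_simps)
  moreover have "[:-1,1::real:] \<noteq> 0" by simp
  ultimately have "R1 = [:0,1:]^2 * Q" using mult_left_cancel by blast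
  then have Q1: "poly Q 1 \<noteq> 0" using R1(2) by simp
  have P: "P = [:0,1:] * [:1,-1:] * (-([:0,1:] * Q))"
    using R0 Q by (simp add: power2_eq_square algebra_simps minus_pCons)
  have "psi_poly k = P div ([:0,1:] * [:1,-1:])"
    unfolding psi_poly_def P_def rodrigues_poly_def ..
  also have "\<dots> = -([:0,1:] * Q)"
    unfolding P by (rule nonzero_mult_div_cancel_left) simp
  finally show "P = [:0,1:] * [:1,-1:] * psi_poly k" "poly (psi_poly k) 0 = 0" "poly (psi_poly k) 1 \<noteq> 0"
    using Q1 P by auto
qed

lemma psi_0: "k \<ge> 1 \<Longrightarrow> psi k 0 = 0"
  using psi_poly_factorization(2) unfolding psi_def by simp

lemma psi_1_neq_0: "k \<ge> 1 \<Longrightarrow> psi k 1 \<noteq> 0"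
  using psi_poly_factorization(3) unfolding psi_def by simp

lemma degree_higher_pderiv: "degree ((pderiv ^^ j) p) = degree (p::real poly) - j"
  by (induction j) (auto simp: degree_pderiv)

lemma degree_pcompose_linear_le: "degree (pcompose p [:a, b:]) \<le> degree p"
  using degree_pcompose_le[of p "[:a, b:]"] by (cases "b = 0") auto

lemma degree_x_one_minus_x_mult:
  "u \<noteq> 0 \<Longrightarrow> degree ([:0,1:] * [:1,-1:] * (u :: real poly)) = degree u + 2"
  by (subst degree_mult_eq) (auto simp: degree_mult_eq)

lemma degree_psi_poly: assumes "k \<ge> 1" shows "degree (psi_poly k) \<le> k"
proof (cases "psi_poly k = 0")
  case False
  have "degree (rodrigues_poly k) = 2 * k + 1"
    unfolding rodrigues_poly_def by (simp add: degree_mult_eq degree_power_eq)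
  then have "degree ((pderiv ^^ (k - 1)) (rodrigues_poly k)) = k + 2"
    using assms unfolding degree_higher_pderiv by arith
  then show ?thesis
    using degree_x_one_minus_x_mult[OF False] psi_poly_factorization(1)[OF assms] by simp
qed simp

lemma poly_vanishing_at_0_1_factor:
  fixes r :: "real poly"
  assumes "poly r 0 = 0" "poly r 1 = 0"
  obtains t where "r = [:0,1:] * [:1,-1:] * t" "t \<noteq> 0 \<Longrightarrow> degree r = degree t + 2"
proof -
  obtain s where s: "r = [:-0,1:] * s" using assms(1) poly_eq_0_iff_dvd[of r 0] by (auto elim: dvdE)
  have "poly s 1 = 0" using assms(2) s by simp
  then obtain t where "s = [:-1,1:] * t" using poly_eq_0_iff_dvd[of s 1] by (auto elim: dvdE)
  then have "r = [:0,1:] * [:1,-1:] * (-t)" using s by (simp add: algebra_simps minus_pCons)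
  moreover have "degree r = degree (-t) + 2" if "-t \<noteq> 0"
    using that by (subst calculation) (rule degree_x_one_minus_x_mult)
  ultimately show ?thesis using that by blast
qed

lemma integral_higher_pderiv_rodrigues_mult_poly:
  assumes "m \<le> k" "degree t < m"
  shows "integral {0..1} (\<lambda>x. poly ((pderiv ^^ m) (rodrigues_poly k)) x * poly t x) = 0"
  using assms
proof (induction m arbitrary: t)
  case 0
  then show ?case by simp
next
  case (Suc m)
  define A where "A = (pderiv ^^ m) (rodrigues_poly k)"
  have "poly A 0 = 0" "poly A 1 = 0"
    unfolding A_def using higher_pderiv_rodrigues_poly_vanishes[of m k] Suc.prems by auto
  then have "integral {0..1} (\<lambda>x. poly ((pderiv ^^ Suc m) (rodrigues_poly k)) x * poly t x) =
        - integral {0..1} (\<lambda>x. poly A x * poly (pderiv t) x)"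
    using integral_01_pderiv_mult_poly[of A t] by (simp add: A_def)
  also have "integral {0..1} (\<lambda>x. poly A x * poly (pderiv t) x) = 0"
  proof (cases m)
    case 0
    then have "pderiv t = 0" using Suc.prems by (simp add: pderiv_eq_0_iff)
    then show ?thesis by simp
  next
    case (Suc m')
    have "degree (pderiv t) < m" using Suc.prems Suc by (simp add: degree_pderiv)
    then show ?thesis unfolding A_def using Suc.IH Suc.prems by simp
  qed
  finally show ?case by simp
qed

lemma integral_psi_mult_poly_vanishing_at_0_1:
  assumes "k \<ge> 1" "degree s \<le> k" "poly s 0 = 0" "poly s 1 = 0"
  shows "integral {0..1} (\<lambda>x. psi k x * poly s x) = 0"
proof -
  obtain t where t: "s = [:0,1:] * [:1,-1:] * t" "t \<noteq> 0 \<Longrightarrow> degree s = degree t + 2"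
    using poly_vanishing_at_0_1_factor[OF assms(3,4)] by blast
  have "psi k x * poly s x = poly ((pderiv ^^ (k - 1)) (rodrigues_poly k)) x * poly t x / fact k" for x
    unfolding psi_def t(1) psi_poly_factorization(1)[OF assms(1)] by (simp add: field_simps)
  moreover have "integral {0..1} (\<lambda>x. poly ((pderiv ^^ (k - 1)) (rodrigues_poly k)) x * poly t x) = 0"
  proof (cases "t = 0")
    case False
    then show ?thesis
      using t(2) assms(2) by (intro integral_higher_pderiv_rodrigues_mult_poly) auto
  qed simp
  ultimately show ?thesis by (simp add: integral_divide_zero)
qed

lemma psi_affine:
  assumes "k \<ge> 1"
  shows "\<exists>P. degree P \<le> k \<and> (\<forall>x. psi k (a + b * x) = poly P x)"
proof (intro exI conjI allI)
  let ?P = "smult (1 / fact k) (pcompose (psi_poly k) [:a, b:])"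
  show "psi k (a + b * x) = poly ?P x" for x by (simp add: psi_def poly_pcompose mult.commute)
  show "degree ?P \<le> k"
    using degree_pcompose_linear_le[of "psi_poly k" a b] degree_psi_poly[OF assms] by simp
qed

lemma phi_eq_bernstein:
  assumes "1 \<le> \<nu>" "\<nu> \<le> k - 1"
  shows "phi k \<nu> x = real ((k - 2) choose (\<nu> - 1)) * x ^ \<nu> * (1 - x) ^ (k - \<nu>)"
proof -
  have "\<nu> = Suc (\<nu> - 1)" "k - \<nu> = Suc (k - 1 - \<nu>)" using assms by auto
  then have "x ^ \<nu> = x * x ^ (\<nu> - 1)" "(1 - x) ^ (k - \<nu>) = (1 - x) * (1 - x) ^ (k - 1 - \<nu>)"
    by (metis power_Suc)+
  then show ?thesis unfolding phi_def by (simp only: mult_ac)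
qed

lemma phi_affine:
  assumes "1 \<le> \<nu>" "\<nu> \<le> k - 1"
  shows "\<exists>P. degree P \<le> k \<and> (\<forall>x. phi k \<nu> (a + b * x) = poly P x)"
proof (intro exI conjI allI)
  define B :: "real poly" where "B = smult (real ((k - 2) choose (\<nu> - 1))) ([:0,1:]^\<nu> * [:1,-1:]^(k - \<nu>))"
  show "phi k \<nu> (a + b * x) = poly (pcompose B [:a, b:]) x" for x
    by (simp add: B_def phi_eq_bernstein[OF assms] poly_pcompose algebra_simps)
  have "degree B \<le> k"
    unfolding B_def using assms by (simp add: degree_mult_eq degree_power_eq)
  then show "degree (pcompose B [:a, b:]) \<le> k"
    using degree_pcompose_linear_le[of B a b] by simp
qed

definition in_bernstein_span :: "nat \<Rightarrow> (real \<Rightarrow> real) \<Rightarrow> bool" where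
  "in_bernstein_span n f \<longleftrightarrow> (\<exists>e. \<forall>x. f x = (\<Sum>a\<le>n. e a * x ^ a * (1 - x) ^ (n - a)))"

lemma in_bernstein_span_add:
  assumes "in_bernstein_span n f" "in_bernstein_span n g"
  shows "in_bernstein_span n (\<lambda>x. f x + g x)"
proof -
  obtain e1 e2 where "\<forall>x. f x = (\<Sum>a\<le>n. e1 a * x ^ a * (1 - x) ^ (n - a))"
    "\<forall>x. g x = (\<Sum>a\<le>n. e2 a * x ^ a * (1 - x) ^ (n - a))"
    using assms unfolding in_bernstein_span_def by blast
  then show ?thesis unfolding in_bernstein_span_def
    by (intro exI[of _ "\<lambda>a. e1 a + e2 a"]) (simp add: sum.distrib algebra_simps)
qed

lemma in_bernstein_span_sum:
  assumes "finite I" "\<And>i. i \<in> I \<Longrightarrow> in_bernstein_span n (g i)"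
  shows "in_bernstein_span n (\<lambda>x. \<Sum>i\<in>I. c i * g i x)"
  using assms
proof (induction I rule: finite_induct)
  case empty
  show ?case unfolding in_bernstein_span_def by (intro exI[of _ "\<lambda>_. 0"]) simp
next
  case (insert i I)
  obtain e where "\<forall>x. g i x = (\<Sum>a\<le>n. e a * x ^ a * (1 - x) ^ (n - a))"
    using insert.prems unfolding in_bernstein_span_def by blast
  then have "in_bernstein_span n (\<lambda>x. c i * g i x)" unfolding in_bernstein_span_def
    by (intro exI[of _ "\<lambda>a. c i * e a"]) (simp add: sum_distrib_left mult.assoc)
  then show ?case using insert by (simp add: in_bernstein_span_add)
qed

text \<open>Induction on the defect \<open>n - (a + b)\<close>, splitting with \<open>1 = x + (1 - x)\<close>.\<close>

lemma in_bernstein_span_monomial: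
  assumes "a + b \<le> n" shows "in_bernstein_span n (\<lambda>x. x ^ a * (1 - x) ^ b)"
proof -
  have "\<forall>a b. a + b + d = n \<longrightarrow> in_bernstein_span n (\<lambda>x. x ^ a * (1 - x) ^ b)" for d
  proof (induction d)
    case 0
    show ?case
    proof (intro allI impI)
      fix a b assume ab: "a + b + 0 = n"
      have "x ^ a * (1 - x) ^ b = (\<Sum>a'\<le>n. (if a' = a then 1 else 0) * x ^ a' * (1 - x) ^ (n - a'))"
        for x :: real
        using ab by (simp add: if_distrib[of "\<lambda>c. c * _"] cong: if_cong) (simp flip: ab)
      then show "in_bernstein_span n (\<lambda>x. x ^ a * (1 - x) ^ b)" unfolding in_bernstein_span_def
        by (intro exI[of _ "\<lambda>a'. if a' = a then 1 else 0"]) blast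
    qed
  next
    case (Suc d)
    show ?case
    proof (intro allI impI)
      fix a b assume ab: "a + b + Suc d = n"
      have "in_bernstein_span n (\<lambda>x. x ^ Suc a * (1 - x) ^ b + x ^ a * (1 - x) ^ Suc b)"
        using Suc.IH[rule_format, of "Suc a" b] Suc.IH[rule_format, of a "Suc b"] ab
        by (intro in_bernstein_span_add) auto
      moreover have "x ^ Suc a * (1 - x) ^ b + x ^ a * (1 - x) ^ Suc b = x ^ a * (1 - x) ^ b"
        for x :: real
        by (simp add: algebra_simps)
      ultimately show "in_bernstein_span n (\<lambda>x. x ^ a * (1 - x) ^ b)" by simp
    qed
  qed
  then show ?thesis using assms by (metis le_add_diff_inverse)
qed

lemma in_bernstein_span_poly:
  assumes "degree t \<le> n" shows "in_bernstein_span n (poly t)"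
proof -
  have "in_bernstein_span n (\<lambda>x. \<Sum>i\<le>degree t. coeff t i * (x ^ i * (1 - x) ^ 0))"
    using assms by (intro in_bernstein_span_sum in_bernstein_span_monomial) auto
  then show ?thesis by (simp add: poly_altdef[abs_def])
qed

lemma poly_vanishing_at_0_1_eq_phi_sum:
  assumes "degree r \<le> k" "poly r 0 = 0" "poly r 1 = 0"
  shows "\<exists>a. \<forall>x. poly r x = (\<Sum>\<nu>\<in>{1..k-1}. a \<nu> * phi k \<nu> x)"
proof -
  obtain t where t: "r = [:0,1:] * [:1,-1:] * t" "t \<noteq> 0 \<Longrightarrow> degree r = degree t + 2"
    using poly_vanishing_at_0_1_factor[OF assms(2,3)] by blast
  show ?thesis
  proof (cases "t = 0")
    case True
    then show ?thesis using t(1) by (intro exI[of _ "\<lambda>_. 0"]) simp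
  next
    case False
    define n where "n = k - 2"
    have k: "k - 1 = Suc n" "degree t \<le> n" using t(2)[OF False] assms(1) unfolding n_def by arith+
    obtain e where e: "\<forall>x. poly t x = (\<Sum>a\<le>n. e a * x ^ a * (1 - x) ^ (n - a))"
      using in_bernstein_span_poly[OF k(2)] unfolding in_bernstein_span_def by blast
    define A where "A = (\<lambda>\<nu>. e (\<nu> - 1) / real (n choose (\<nu> - 1)))"
    have "(\<Sum>\<nu>\<in>{1..k-1}. A \<nu> * phi k \<nu> x) = poly r x" for x
    proof -
      have "(\<Sum>\<nu>\<in>{1..k-1}. A \<nu> * phi k \<nu> x) = (\<Sum>a\<le>n. A (Suc a) * phi k (Suc a) x)"
        using sum.atLeast_Suc_atMost_Suc_shift[of "\<lambda>\<nu>. A \<nu> * phi k \<nu> x" 0 n]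
        unfolding k(1) atMost_atLeast0 by simp
      also have "\<dots> = (\<Sum>a\<le>n. x * (1 - x) * (e a * x ^ a * (1 - x) ^ (n - a)))"
      proof (rule sum.cong[OF refl])
        fix a assume "a \<in> {..n}"
        moreover have "k - 2 = n" "k - 1 - Suc a = n - a" unfolding n_def using k(1) by arith+
        ultimately show "A (Suc a) * phi k (Suc a) x = x * (1 - x) * (e a * x ^ a * (1 - x) ^ (n - a))"
          unfolding A_def phi_def by (simp add: field_simps)
      qed
      also have "\<dots> = x * (1 - x) * poly t x" using e by (simp add: sum_distrib_left)
      also have "\<dots> = poly r x" using t(1) by (simp add: algebra_simps)
      finally show ?thesis .
    qed
    then show ?thesis by (intro exI[of _ A]) simp
  qed
qed

lemma ip_poly_self: "ip (poly r) (poly r) = integral {0..1} (\<lambda>t. (poly r t)\<^sup>2)"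
  using ip_continuous_eq_integral[of "poly r" "poly r"] by (simp add: power2_eq_square continuous_on_poly)

lemma poly_at_1_sq_le_integral:
  "\<exists>K\<ge>0. \<forall>r::real poly. degree r \<le> k \<longrightarrow> (poly r 1)\<^sup>2 \<le> K * integral {0..1} (\<lambda>t. (poly r t)\<^sup>2)"
proof -
  have "continuous_on UNIV (\<lambda>x::real. x ^ j)" for j by (intro continuous_intros)
  then obtain K where K: "K \<ge> 0" "stable_coeffs {..k} (\<lambda>j x. x ^ j) K"
    using ex_stable_coeffs[of "{..k}" "\<lambda>j x::real. x ^ j"] by blast
  show ?thesis
  proof (intro exI[of _ "real (k + 1) * K"] conjI allI impI)
    show "real (k + 1) * K \<ge> 0" using K(1) by simp
    fix r :: "real poly" assume r: "degree r \<le> k"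
    have r_eq: "poly r = (\<lambda>x. \<Sum>j\<le>k. coeff r j * x ^ j)"
    proof
      fix x :: real
      have "poly r x = poly (\<Sum>i\<le>k. monom (coeff r i) i) x" using poly_as_sum_of_monoms'[OF r] by simp
      then show "poly r x = (\<Sum>j\<le>k. coeff r j * x ^ j)" by (simp add: poly_sum poly_monom)
    qed
    obtain c where c1: "\<forall>x\<in>{0..1}. (\<Sum>j\<le>k. c j * x ^ j) = poly r x"
      and c2: "(\<Sum>j\<le>k. (c j)\<^sup>2) \<le> K * ip (poly r) (poly r)"
      using K(2) unfolding stable_coeffs_def r_eq by blast
    have "poly r 1 = (\<Sum>j\<le>k. c j)" using c1[rule_format, of 1] by simp
    then have "(poly r 1)\<^sup>2 \<le> (\<Sum>j\<le>k. (c j)\<^sup>2) * real (k + 1)"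
      using sum_squared_le_sum_of_squares[of c "{..k}"] by simp
    also have "\<dots> \<le> real (k + 1) * K * integral {0..1} (\<lambda>t. (poly r t)\<^sup>2)"
      using c2 by (simp add: ip_poly_self mult_right_mono mult.commute)
    finally show "(poly r 1)\<^sup>2 \<le> real (k + 1) * K * integral {0..1} (\<lambda>t. (poly r t)\<^sup>2)" .
  qed
qed

lemma phi_coeffs_of_poly_vanishing_at_0_1:
  "\<exists>K\<ge>0. \<forall>r::real poly. degree r \<le> k \<and> poly r 0 = 0 \<and> poly r 1 = 0 \<longrightarrow>
    (\<exists>c. (\<forall>t\<in>{0..1}. poly r t = (\<Sum>\<nu>\<in>{1..k-1}. c \<nu> * phi k \<nu> t)) \<and>
         (\<Sum>\<nu>\<in>{1..k-1}. (c \<nu>)\<^sup>2) \<le> K * integral {0..1} (\<lambda>t. (poly r t)\<^sup>2))"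
proof -
  have "continuous_on UNIV (phi k \<nu>)" for \<nu>
    unfolding phi_def by (intro continuous_intros)
  then obtain K where K: "K \<ge> 0" "stable_coeffs {1..k-1} (phi k) K"
    using ex_stable_coeffs[of "{1..k-1}" "phi k"] by blast
  show ?thesis
  proof (intro exI[of _ K] conjI allI impI)
    fix r :: "real poly" assume "degree r \<le> k \<and> poly r 0 = 0 \<and> poly r 1 = 0"
    then obtain a where ra: "poly r = (\<lambda>x. \<Sum>\<nu>\<in>{1..k-1}. a \<nu> * phi k \<nu> x)"
      using poly_vanishing_at_0_1_eq_phi_sum by blast
    obtain c where c1: "\<forall>x\<in>{0..1}. (\<Sum>\<nu>\<in>{1..k-1}. c \<nu> * phi k \<nu> x) = poly r x"
      and c2: "(\<Sum>\<nu>\<in>{1..k-1}. (c \<nu>)\<^sup>2) \<le> K * ip (poly r) (poly r)"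
      using K(2) unfolding stable_coeffs_def ra by blast
    then show "\<exists>c. (\<forall>t\<in>{0..1}. poly r t = (\<Sum>\<nu>\<in>{1..k-1}. c \<nu> * phi k \<nu> t)) \<and>
         (\<Sum>\<nu>\<in>{1..k-1}. (c \<nu>)\<^sup>2) \<le> K * integral {0..1} (\<lambda>t. (poly r t)\<^sup>2)"
      by (intro exI[of _ c]) (simp add: ip_poly_self)
  qed (use K in simp)
qed

section \<open>Mesh cells, periodization and the basis functions\<close>

abbreviation cell :: "nat \<Rightarrow> nat \<Rightarrow> real set" where
  "cell N j \<equiv> {node N (int j - 1)..node N (int j)}"

lemma integral_rescale_01:
  fixes F :: "real \<Rightarrow> real"
  assumes "continuous_on UNIV F" "c > 0"
  shows "integral {a..a+c} F = c * integral {0..1} (\<lambda>t. F (a + c * t))"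
proof -
  have "(F has_integral integral {a..a+c} F) {a..a+c}"
    using assms(2) by (intro integrable_integral integrable_continuous_interval continuous_on_subset[OF assms(1)]) auto
  then have "(F has_integral integral {a..a+c} F) (cbox a (a+c))" by (simp add: cbox_interval)
  from has_integral_affinity'[OF this assms(2), of a]
  have "((\<lambda>x. F (c * x + a)) has_integral (inverse c * integral {a..a+c} F)) {0..1}"
    using assms(2) by (simp add: cbox_interval)
  then have "integral {0..1} (\<lambda>t. F (a + c * t)) = inverse c * integral {a..a+c} F"
    by (simp add: integral_unique add.commute)
  then show ?thesis using assms(2) by simp
qed

lemma integral_reflect_01:
  fixes G :: "real \<Rightarrow> real"
  assumes "continuous_on UNIV G"
  shows "integral {0..1} (\<lambda>t. G (1 - t)) = integral {0..1} G"
proof -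
  have "integral {-1..-0} (\<lambda>x. G (1 - (- x))) = integral {0..1} (\<lambda>t. G (1 - t))"
    using Henstock_Kurzweil_Integration.integral_reflect_real[of 1 0 "\<lambda>t. G (1 - t)"] by simp
  then have e1: "integral {0..1} (\<lambda>t. G (1 - t)) = integral {-1..0} (\<lambda>x. G (1 + x))" by simp
  have "(G has_integral integral {0..1} G) {0..1}"
    by (intro integrable_integral integrable_continuous_interval continuous_on_subset[OF assms(1)]) auto
  then have "(G has_integral integral {0..1} G) (cbox 0 1)" by (simp add: cbox_interval)
  from has_integral_affinity'[OF this, of 1 1]
  have "((\<lambda>x. G (x + 1)) has_integral integral {0..1} G) {-1..0}"
    by (simp add: cbox_interval)
  then have "integral {-1..0} (\<lambda>x. G (1 + x)) = integral {0..1} G"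
    by (simp add: integral_unique add.commute)
  then show ?thesis using e1 by simp
qed

lemma integral_0_node_eq_sum_cells:
  fixes f :: "real \<Rightarrow> real"
  assumes "continuous_on UNIV f" "N \<ge> 1"
  shows "integral {0..node N (int n)} f = (\<Sum>j\<in>{1..n}. integral (cell N j) f)"
proof (induction n)
  case 0 then show ?case by (simp add: node_def)
next
  case (Suc n)
  have le: "node N (int n) \<le> node N (int (Suc n))" "0 \<le> node N (int n)"
    using assms(2) by (auto simp: node_def divide_right_mono)
  have "integral {0..node N (int n)} f + integral {node N (int n)..node N (int (Suc n))} f =
        integral {0..node N (int (Suc n))} f"
    using le by (intro Henstock_Kurzweil_Integration.integral_combine integrable_continuous_interval continuous_on_subset[OF assms(1)]) auto
  then show ?case using Suc by simp
qed

lemma integral_01_eq_sum_cells: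
  fixes f :: "real \<Rightarrow> real"
  assumes "continuous_on UNIV f" "N \<ge> 1"
  shows "integral {0..1} f = (\<Sum>j\<in>{1..N}. integral (cell N j) f)"
  using integral_0_node_eq_sum_cells[OF assms, of N] assms(2) by (simp add: node_def)

definition periodize :: "(real \<Rightarrow> real) \<Rightarrow> real \<Rightarrow> real" where
  "periodize f x = infsum (\<lambda>n::int. f (x - of_int n)) UNIV"

definition vanishes_outside_0_2 :: "(real \<Rightarrow> real) \<Rightarrow> bool" where
  "vanishes_outside_0_2 f \<longleftrightarrow> (\<forall>t. t \<le> 0 \<or> t \<ge> 2 \<longrightarrow> f t = 0)"

lemma periodize_local_sum:
  assumes "vanishes_outside_0_2 f" "dist x x0 < 1"
  shows "periodize f x = (\<Sum>n\<in>{\<lfloor>x0\<rfloor> - 3..\<lfloor>x0\<rfloor> + 2}. f (x - of_int n))"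
proof -
  have "periodize f x = infsum (\<lambda>n::int. f (x - of_int n)) {\<lfloor>x0\<rfloor> - 3..\<lfloor>x0\<rfloor> + 2}"
    unfolding periodize_def
  proof (rule infsum_cong_neutral)
    fix n :: int assume n: "n \<in> UNIV - {\<lfloor>x0\<rfloor> - 3..\<lfloor>x0\<rfloor> + 2}"
    have "x - of_int n \<le> 0 \<or> x - of_int n \<ge> 2"
    proof (cases "n < \<lfloor>x0\<rfloor> - 3")
      case True
      then have "of_int n \<le> of_int \<lfloor>x0\<rfloor> - (4::real)" by linarith
      then show ?thesis using assms(2) of_int_floor_le[of x0] unfolding dist_real_def by linarith
    next
      case False
      then have "n > \<lfloor>x0\<rfloor> + 2" using n by auto
      then have "of_int n \<ge> of_int \<lfloor>x0\<rfloor> + (3::real)" by linarith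
      then show ?thesis using assms(2) real_of_int_floor_add_one_gt[of x0] unfolding dist_real_def by linarith
    qed
    then show "f (x - of_int n) = 0" using assms(1) unfolding vanishes_outside_0_2_def by blast
  qed auto
  then show ?thesis by simp
qed

lemma continuous_on_periodize:
  assumes "continuous_on UNIV f" "vanishes_outside_0_2 f"
  shows "continuous_on UNIV (periodize f)"
  unfolding continuous_on_eq_continuous_at[OF open_UNIV]
proof
  fix x0 :: real
  let ?T = "{\<lfloor>x0\<rfloor> - 3..\<lfloor>x0\<rfloor> + 2}"
  have ev: "eventually (\<lambda>x. periodize f x = (\<Sum>n\<in>?T. f (x - of_int n))) (nhds x0)"
    unfolding eventually_nhds_metric using periodize_local_sum[OF assms(2)] by (intro exI[of _ 1]) auto
  have c: "continuous_on UNIV (\<lambda>x. f (x - of_int n))" for n :: int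
    by (rule continuous_on_compose2[OF assms(1)]) (auto intro!: continuous_intros)
  have "continuous_on UNIV (\<lambda>x. \<Sum>n\<in>?T. f (x - of_int n))"
    by (intro continuous_on_sum c)
  then have "isCont (\<lambda>x. \<Sum>n\<in>?T. f (x - of_int n)) x0"
    using continuous_on_eq_continuous_at[OF open_UNIV] by blast
  then show "isCont (periodize f) x0" using isCont_cong[OF ev] by blast
qed

lemma periodize_add_1: "periodize f (x + 1) = periodize f x"
proof -
  have "bij_betw (\<lambda>n::int. n + 1) UNIV UNIV"
    by (rule bij_betwI[of _ _ _ "\<lambda>n. n - 1"]) auto
  from infsum_reindex_bij_betw[OF this, of "\<lambda>n. f (x + 1 - of_int n)"]
  show ?thesis unfolding periodize_def by simp
qed

lemma periodize_on_01:
  assumes "vanishes_outside_0_2 f" "x \<in> {0..1}"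
  shows "periodize f x = f x + f (x + 1)"
proof -
  have "periodize f x = infsum (\<lambda>n::int. f (x - of_int n)) {0, -1}"
    unfolding periodize_def
  proof (rule infsum_cong_neutral)
    fix n :: int assume n: "n \<in> UNIV - {0, -1}"
    then have "n \<ge> 1 \<or> n \<le> -2" by auto
    moreover have "n \<ge> 1 \<Longrightarrow> real_of_int n \<ge> 1" "n \<le> -2 \<Longrightarrow> real_of_int n \<le> -2" by simp_all
    ultimately have "x - of_int n \<le> 0 \<or> x - of_int n \<ge> 2" using assms(2) by auto
    then show "f (x - of_int n) = 0" using assms(1) unfolding vanishes_outside_0_2_def by blast
  qed auto
  then show ?thesis by (simp add: add.commute)
qed

lemma ell_loc_eq:
  assumes "N \<ge> 1" "k \<ge> 1"
  shows "ell_loc k N t = psi k (max 0 (1 - \<bar>t * real N\<bar>))"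
proof -
  have N: "real N > 0" using assms by simp
  have p0: "psi k 0 = 0" using psi_0[OF assms(2)] .
  define s where "s = t * real N"
  have t: "t = s / real N" using N unfolding s_def by simp
  have c1: "(- (1 / real N) \<le> t) = (-1 \<le> s)" "(t \<le> 0) = (s \<le> 0)" "(0 < t) = (0 < s)"
       "(t \<le> 1 / real N) = (s \<le> 1)"
    unfolding t using N by (auto simp: field_simps)
  have c2: "(t + 1 / real N) / (1 / real N) = s + 1" "(1 / real N - t) / (1 / real N) = 1 - s"
    unfolding t using N by (auto simp: field_simps)
  show ?thesis
    unfolding ell_loc_def Let_def c1 c2 s_def[symmetric]
    using p0 by (auto simp: max_def add.commute)
qed

lemma q_loc_eq:
  assumes "N \<ge> 1"
  shows "q_loc k N \<nu> t = phi k \<nu> (max 0 (min 1 (t * real N)))"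
proof -
  have N: "real N > 0" using assms by simp
  define s where "s = t * real N"
  have t: "t = s / real N" using N unfolding s_def by simp
  have c1: "(0 \<le> t) = (0 \<le> s)" "(t \<le> 1 / real N) = (s \<le> 1)" "t / (1 / real N) = s"
    unfolding t using N by (auto simp: field_simps)
  have p0: "phi k \<nu> 0 = 0" "phi k \<nu> 1 = 0" by (simp_all add: phi_def)
  show ?thesis
    unfolding q_loc_def Let_def c1 s_def[symmetric]
    using p0 by (auto simp: max_def min_def)
qed

lemma node_scale: "N \<ge> 1 \<Longrightarrow> (x - node N m) * real N = x * real N - of_int m"
  by (simp add: node_def field_simps)

lemma cell_bounds:
  assumes "N \<ge> 1" "x \<in> {node N (j - 1)..node N j}"
  shows "of_int j - 1 \<le> x * real N" "x * real N \<le> of_int j"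
proof -
  have N: "real N > 0" using assms by simp
  from assms(2) have "(of_int j - 1) / real N \<le> x" "x \<le> of_int j / real N" by (auto simp: node_def)
  then show "of_int j - 1 \<le> x * real N" "x * real N \<le> of_int j" using N by (auto simp: field_simps)
qed

lemma ell_loc_on_cell:
  assumes "N \<ge> 1" "k \<ge> 1" "x \<in> {node N (j - 1)..node N j}"
  shows "ell_loc k N (x - node N m) =
    (if m = j then psi k (x * real N - (of_int j - 1)) else if m = j - 1 then psi k (of_int j - x * real N) else 0)"
proof -
  define y where "y = x * real N"
  have y: "of_int j - 1 \<le> y" "y \<le> of_int j" using cell_bounds[OF assms(1,3)] unfolding y_def by auto
  have e: "ell_loc k N (x - node N m) = psi k (max 0 (1 - \<bar>y - of_int m\<bar>))"
    unfolding ell_loc_eq[OF assms(1,2)] node_scale[OF assms(1)] y_def ..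
  have p0: "psi k 0 = 0" using psi_0[OF assms(2)] .
  consider "m = j" | "m = j - 1" | "m \<ge> j + 1" | "m \<le> j - 2" by linarith
  then show ?thesis
  proof cases
    case 1 then show ?thesis unfolding e y_def[symmetric] using y by (auto simp: max_def algebra_simps)
  next
    case 2 then show ?thesis unfolding e y_def[symmetric] using y by (auto simp: max_def)
  next
    case 3
    then have "real_of_int m \<ge> of_int j + 1" by linarith
    then have "max 0 (1 - \<bar>y - of_int m\<bar>) = 0" using y by auto
    then show ?thesis unfolding e using 3 p0 by auto
  next
    case 4
    then have "real_of_int m \<le> of_int j - 2" by linarith
    then have "max 0 (1 - \<bar>y - of_int m\<bar>) = 0" using y by auto
    then show ?thesis unfolding e using 4 p0 by auto
  qed
qed

lemma q_loc_on_cell: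
  assumes "N \<ge> 1" "x \<in> {node N (j - 1)..node N j}"
  shows "q_loc k N \<nu> (x - node N m) = (if m = j - 1 then phi k \<nu> (x * real N - (of_int j - 1)) else 0)"
proof -
  define y where "y = x * real N"
  have y: "of_int j - 1 \<le> y" "y \<le> of_int j" using cell_bounds[OF assms(1,2)] unfolding y_def by auto
  have e: "q_loc k N \<nu> (x - node N m) = phi k \<nu> (max 0 (min 1 (y - of_int m)))"
    unfolding q_loc_eq[OF assms(1)] node_scale[OF assms(1)] y_def ..
  have p0: "phi k \<nu> 0 = 0" "phi k \<nu> 1 = 0" by (simp_all add: phi_def)
  consider "m = j - 1" | "m \<ge> j" | "m \<le> j - 2" by linarith
  then show ?thesis
  proof cases
    case 1 then show ?thesis unfolding e y_def[symmetric] using y by (auto simp: max_def min_def)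
  next
    case 2
    then have "real_of_int m \<ge> of_int j" by linarith
    then have "max 0 (min 1 (y - of_int m)) = 0" using y by auto
    then show ?thesis unfolding e using 2 p0 by auto
  next
    case 3
    then have "real_of_int m \<le> of_int j - 2" by linarith
    then have "max 0 (min 1 (y - of_int m)) = 1" using y by auto
    then show ?thesis unfolding e using 3 p0 by auto
  qed
qed

lemma ell_eq_periodize: "ell k N i = periodize (\<lambda>t. ell_loc k N (t - node N (int i)))"
  by (rule ext) (simp add: ell_def periodize_def diff_diff_eq add.commute)

lemma q_eq_periodize: "q k N i \<nu> = periodize (\<lambda>t. q_loc k N \<nu> (t - node N (int i - 1)))"
  by (rule ext) (simp add: q_def periodize_def diff_diff_eq add.commute)

lemma ell_loc_shift_vanishes_outside_0_2:
  assumes "N \<ge> 1" "k \<ge> 1" "i \<in> {1..N}"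
  shows "vanishes_outside_0_2 (\<lambda>t. ell_loc k N (t - node N (int i)))"
  unfolding vanishes_outside_0_2_def
proof (intro allI impI)
  fix t :: real assume t: "t \<le> 0 \<or> t \<ge> 2"
  have N: "real N \<ge> 1" using assms by simp
  have i: "1 \<le> real i" "real i \<le> real N" using assms by auto
  have "\<bar>t * real N - real i\<bar> \<ge> 1"
  proof (cases "t \<le> 0")
    case True
    then have "t * real N \<le> 0" using N by (simp add: mult_nonpos_nonneg)
    then show ?thesis using i by linarith
  next
    case False
    then have "t \<ge> 2" using t by auto
    then have "t * real N \<ge> 2 * real N" using N by (intro mult_right_mono) auto
    then show ?thesis using i N by linarith
  qed
  then show "ell_loc k N (t - node N (int i)) = 0"
    unfolding ell_loc_eq[OF assms(1,2)] node_scale[OF assms(1)] using psi_0[OF assms(2)]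
    by (simp add: max_def)
qed

lemma q_loc_shift_vanishes_outside_0_2:
  assumes "N \<ge> 1" "i \<in> {1..N}"
  shows "vanishes_outside_0_2 (\<lambda>t. q_loc k N \<nu> (t - node N (int i - 1)))"
  unfolding vanishes_outside_0_2_def
proof (intro allI impI)
  fix t :: real assume t: "t \<le> 0 \<or> t \<ge> 2"
  have N: "real N \<ge> 1" using assms by simp
  have i: "1 \<le> real i" "real i \<le> real N" using assms by auto
  have "t * real N - (real i - 1) \<le> 0 \<or> t * real N - (real i - 1) \<ge> 1"
  proof (cases "t \<le> 0")
    case True
    then have "t * real N \<le> 0" using N by (simp add: mult_nonpos_nonneg)
    then show ?thesis using i by linarith
  next
    case False
    then have "t \<ge> 2" using t by auto
    then have "t * real N \<ge> 2 * real N" using N by (intro mult_right_mono) auto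
    then show ?thesis using i N by linarith
  qed
  then show "q_loc k N \<nu> (t - node N (int i - 1)) = 0"
    unfolding q_loc_eq[OF assms(1)] node_scale[OF assms(1)]
    by (auto simp: max_def min_def phi_def)
qed

lemma continuous_on_psi: "continuous_on UNIV f \<Longrightarrow> continuous_on UNIV (\<lambda>x. psi k (f x))"
  unfolding psi_def by (intro continuous_intros) auto

lemma continuous_on_phi: "continuous_on UNIV f \<Longrightarrow> continuous_on UNIV (\<lambda>x. phi k \<nu> (f x))"
  unfolding phi_def by (intro continuous_intros) auto

lemma continuous_on_ell:
  assumes "N \<ge> 1" "k \<ge> 1" "i \<in> {1..N}"
  shows "continuous_on UNIV (ell k N i)"
  unfolding ell_eq_periodize
proof (rule continuous_on_periodize[OF _ ell_loc_shift_vanishes_outside_0_2[OF assms]])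
  show "continuous_on UNIV (\<lambda>t. ell_loc k N (t - node N (int i)))"
    unfolding ell_loc_eq[OF assms(1,2)] by (intro continuous_on_psi continuous_intros)
qed

lemma continuous_on_q:
  assumes "N \<ge> 1" "i \<in> {1..N}"
  shows "continuous_on UNIV (q k N i \<nu>)"
  unfolding q_eq_periodize
proof (rule continuous_on_periodize[OF _ q_loc_shift_vanishes_outside_0_2[OF assms]])
  show "continuous_on UNIV (\<lambda>t. q_loc k N \<nu> (t - node N (int i - 1)))"
    unfolding q_loc_eq[OF assms(1)] by (intro continuous_on_phi continuous_intros)
qed

lemma periodic1_ell: "periodic1 (ell k N i)"
  unfolding periodic1_def ell_eq_periodize by (simp add: periodize_add_1)

lemma periodic1_q: "periodic1 (q k N i \<nu>)"
  unfolding periodic1_def q_eq_periodize by (simp add: periodize_add_1)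

lemma cell_subset_01:
  assumes "N \<ge> 1" "j \<in> {1..N}" "x \<in> cell N j"
  shows "x \<in> {0..1}"
proof -
  have N: "real N > 0" using assms by simp
  have "0 \<le> node N (int j - 1)" "node N (int j) \<le> 1" using assms N by (auto simp: node_def)
  then show ?thesis using assms(3) by auto
qed

text \<open>On the first cell \<open>\<ell>\<^sub>N\<close> contributes through its periodic copy centred at \<open>x\<^sub>0\<close>.\<close>

lemma ell_on_cell:
  assumes "N \<ge> 1" "k \<ge> 1" "i \<in> {1..N}" "j \<in> {1..N}" "x \<in> cell N j"
  shows "ell k N i x = (if i = j then psi k (x * real N - (real j - 1)) else 0) +
     (if int i = int j - 1 \<or> (i = N \<and> j = 1) then psi k (real j - x * real N) else 0)"
proof -
  have x01: "x \<in> {0..1}" using cell_subset_01[OF assms(1,4,5)] .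
  have "ell k N i x = ell_loc k N (x - node N (int i)) + ell_loc k N (x + 1 - node N (int i))"
    unfolding ell_eq_periodize using periodize_on_01[OF ell_loc_shift_vanishes_outside_0_2[OF assms(1-3)] x01] by simp
  also have "x + 1 - node N (int i) = x - node N (int i - int N)"
    using assms(1) by (simp add: node_def field_simps)
  finally have e: "ell k N i x = ell_loc k N (x - node N (int i)) + ell_loc k N (x - node N (int i - int N))" .
  have l1: "ell_loc k N (x - node N (int i)) = (if i = j then psi k (x * real N - (real j - 1)) else 0) +
     (if int i = int j - 1 then psi k (real j - x * real N) else 0)"
    using ell_loc_on_cell[OF assms(1,2), of x "int j" "int i"] assms(5) by auto
  have l2: "ell_loc k N (x - node N (int i - int N)) = (if i = N \<and> j = 1 then psi k (real j - x * real N) else 0)"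
    using ell_loc_on_cell[OF assms(1,2), of x "int j" "int i - int N"] assms by auto
  show ?thesis unfolding e l1 l2 using assms(3,4) by auto
qed

lemma q_on_cell:
  assumes "N \<ge> 1" "i \<in> {1..N}" "j \<in> {1..N}" "x \<in> cell N j"
  shows "q k N i \<nu> x = (if i = j then phi k \<nu> (x * real N - (real j - 1)) else 0)"
proof -
  have x01: "x \<in> {0..1}" using cell_subset_01[OF assms(1,3,4)] .
  have "q k N i \<nu> x = q_loc k N \<nu> (x - node N (int i - 1)) + q_loc k N \<nu> (x + 1 - node N (int i - 1))"
    unfolding q_eq_periodize using periodize_on_01[OF q_loc_shift_vanishes_outside_0_2[OF assms(1,2)] x01] by simp
  also have "x + 1 - node N (int i - 1) = x - node N (int i - 1 - int N)"
    using assms(1) by (simp add: node_def field_simps)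
  finally have e: "q k N i \<nu> x = q_loc k N \<nu> (x - node N (int i - 1)) + q_loc k N \<nu> (x - node N (int i - 1 - int N))" .
  have l1: "q_loc k N \<nu> (x - node N (int i - 1)) = (if i = j then phi k \<nu> (x * real N - (real j - 1)) else 0)"
    using q_loc_on_cell[OF assms(1), of x "int j" k \<nu> "int i - 1"] assms(4) by auto
  have l2: "q_loc k N \<nu> (x - node N (int i - 1 - int N)) = 0"
    using q_loc_on_cell[OF assms(1), of x "int j" k \<nu> "int i - 1 - int N"] assms by auto
  show ?thesis unfolding e l1 l2 by simp
qed

section \<open>The space \<open>V\<^sub>h\<^sup>k\<close>\<close>

lemma Vh_zero: "(\<lambda>x. 0) \<in> Vh k N"
  unfolding Vh_def periodic1_def by (auto intro!: exI[of _ 0])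

lemma Vh_piece: "f \<in> Vh k N \<Longrightarrow> i \<in> {1..N} \<Longrightarrow>
   \<exists>p. degree p \<le> k \<and> (\<forall>x\<in>cell N i. f x = poly p x)"
  unfolding Vh_def by auto

lemma Vh_add: assumes "f \<in> Vh k N" "g \<in> Vh k N" shows "(\<lambda>x. f x + g x) \<in> Vh k N"
proof -
  have "\<exists>p. degree p \<le> k \<and> (\<forall>x\<in>cell N i. f x + g x = poly p x)"
    if iN: "i \<in> {1..N}" for i
  proof -
    obtain p1 where p1: "degree p1 \<le> k" "\<forall>x\<in>cell N i. f x = poly p1 x"
      using Vh_piece[OF assms(1) iN] by blast
    obtain p2 where p2: "degree p2 \<le> k" "\<forall>x\<in>cell N i. g x = poly p2 x"
      using Vh_piece[OF assms(2) iN] by blast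
    show ?thesis using p1 p2 by (intro exI[of _ "p1 + p2"]) (auto intro!: degree_add_le)
  qed
  moreover have "continuous_on UNIV (\<lambda>x. f x + g x)"
    using assms unfolding Vh_def by (intro continuous_on_add) auto
  moreover have "periodic1 (\<lambda>x. f x + g x)" using assms unfolding Vh_def periodic1_def by auto
  ultimately show ?thesis unfolding Vh_def by blast
qed

lemma Vh_cmult: assumes "f \<in> Vh k N" shows "(\<lambda>x. c * f x) \<in> Vh k N"
proof -
  have "\<exists>p. degree p \<le> k \<and> (\<forall>x\<in>cell N i. c * f x = poly p x)"
    if iN: "i \<in> {1..N}" for i
  proof -
    obtain p1 where p1: "degree p1 \<le> k" "\<forall>x\<in>cell N i. f x = poly p1 x"
      using Vh_piece[OF assms(1) iN] by blast
    show ?thesis using p1 by (intro exI[of _ "smult c p1"]) (auto intro: order.trans[OF degree_smult_le])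
  qed
  moreover have "continuous_on UNIV (\<lambda>x. c * f x)"
    using assms unfolding Vh_def by (intro continuous_on_mult continuous_on_const) auto
  moreover have "periodic1 (\<lambda>x. c * f x)" using assms unfolding Vh_def periodic1_def by auto
  ultimately show ?thesis unfolding Vh_def by blast
qed

lemma Vh_diff: assumes "f \<in> Vh k N" "g \<in> Vh k N" shows "(\<lambda>x. f x - g x) \<in> Vh k N"
  using Vh_add[OF assms(1) Vh_cmult[OF assms(2), of "-1"]] by simp

lemma Vh_sum: assumes "finite I" "\<And>i. i \<in> I \<Longrightarrow> g i \<in> Vh k N"
  shows "(\<lambda>x. \<Sum>j\<in>I. c j * g j x) \<in> Vh k N"
  using assms
proof (induction I rule: finite_induct)
  case empty then show ?case by (simp add: Vh_zero)
next
  case (insert a F) then show ?case by (simp add: Vh_add Vh_cmult)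
qed

lemma Vh_continuous: "f \<in> Vh k N \<Longrightarrow> continuous_on UNIV f"
  unfolding Vh_def by auto

lemma Vh_periodic1: "f \<in> Vh k N \<Longrightarrow> periodic1 f"
  unfolding Vh_def by auto

lemma ell_in_Vh:
  assumes "N \<ge> 1" "k \<ge> 1" "i \<in> {1..N}"
  shows "ell k N i \<in> Vh k N"
  unfolding Vh_def
proof (intro CollectI conjI ballI)
  show "continuous_on UNIV (ell k N i)" by (rule continuous_on_ell[OF assms])
  show "periodic1 (ell k N i)" by (rule periodic1_ell)
  fix j assume j: "j \<in> {1..N}"
  obtain P1 where P1: "degree P1 \<le> k" "\<forall>x. psi k (- (real j - 1) + real N * x) = poly P1 x"
    using psi_affine[OF assms(2)] by blast
  obtain P2 where P2: "degree P2 \<le> k" "\<forall>x. psi k (real j + (- real N) * x) = poly P2 x"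
    using psi_affine[OF assms(2)] by blast
  let ?P = "(if i = j then P1 else 0) + (if int i = int j - 1 \<or> (i = N \<and> j = 1) then P2 else 0)"
  show "\<exists>p. degree p \<le> k \<and> (\<forall>x\<in>cell N j. ell k N i x = poly p x)"
  proof (intro exI[of _ ?P] conjI ballI)
    show "degree ?P \<le> k" using P1 P2 by (auto intro!: degree_add_le)
    fix x assume x: "x \<in> cell N j"
    have a: "psi k (x * real N - (real j - 1)) = poly P1 x" using P1(2)[rule_format, of x] by (simp add: algebra_simps)
    have b: "psi k (real j - x * real N) = poly P2 x" using P2(2)[rule_format, of x] by (simp add: algebra_simps)
    show "ell k N i x = poly ?P x" unfolding ell_on_cell[OF assms j x] a b by simp
  qed
qed

lemma q_in_Vh:
  assumes "N \<ge> 1" "i \<in> {1..N}" "1 \<le> \<nu>" "\<nu> \<le> k - 1"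
  shows "q k N i \<nu> \<in> Vh k N"
  unfolding Vh_def
proof (intro CollectI conjI ballI)
  show "continuous_on UNIV (q k N i \<nu>)" by (rule continuous_on_q[OF assms(1,2)])
  show "periodic1 (q k N i \<nu>)" by (rule periodic1_q)
  fix j assume j: "j \<in> {1..N}"
  obtain P1 where P1: "degree P1 \<le> k" "\<forall>x. phi k \<nu> (- (real j - 1) + real N * x) = poly P1 x"
    using phi_affine[OF assms(3,4)] by blast
  let ?P = "(if i = j then P1 else 0)"
  show "\<exists>p. degree p \<le> k \<and> (\<forall>x\<in>cell N j. q k N i \<nu> x = poly p x)"
  proof (intro exI[of _ ?P] conjI ballI)
    show "degree ?P \<le> k" using P1 by auto
    fix x assume x: "x \<in> cell N j"
    have a: "phi k \<nu> (x * real N - (real j - 1)) = poly P1 x" using P1(2)[rule_format, of x] by (simp add: algebra_simps)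
    show "q k N i \<nu> x = poly ?P x" unfolding q_on_cell[OF assms(1,2) j x] a by simp
  qed
qed

lemma periodic1_node_eq_0:
  assumes "N \<ge> 1" "periodic1 w" "\<And>j. j \<in> {1..N} \<Longrightarrow> w (node N (int j)) = 0"
  shows "w (node N m) = 0"
proof -
  define d where "d = m div int N"
  define r where "r = m mod int N"
  have m: "m = int N * d + r" unfolding d_def r_def by simp
  have r: "0 \<le> r" "r < int N" unfolding r_def using assms(1) by auto
  have N: "real N > 0" using assms(1) by simp
  show ?thesis
  proof (cases "r = 0")
    case True
    have "node N m = node N (int N) + of_int (d - 1)"
      unfolding m True node_def using N by (simp add: field_simps)
    then have "w (node N m) = w (node N (int N))" using periodic1_add_int[OF assms(2), of "node N (int N)" "d - 1"] by simp
    then show ?thesis using assms(3)[of N] assms(1) by simp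
  next
    case False
    have "node N m = node N (int (nat r)) + of_int d"
      unfolding m node_def using N r by (simp add: field_simps)
    moreover have "nat r \<in> {1..N}" using r False by auto
    ultimately show ?thesis using periodic1_add_int[OF assms(2)] assms(3)[of "nat r"] by simp
  qed
qed

lemma ell_at_node:
  assumes "N \<ge> 1" "k \<ge> 1" "i \<in> {1..N}" "j \<in> {1..N}"
  shows "ell k N i (node N (int j)) = (if i = j then psi k 1 else 0)"
proof -
  have x: "node N (int j) \<in> cell N j"
    using assms(1) by (auto simp: node_def divide_right_mono)
  have e: "node N (int j) * real N = real j" using assms(1) by (simp add: node_def)
  show ?thesis unfolding ell_on_cell[OF assms x] e using psi_0[OF assms(2)] by auto
qed

lemma q_in_S2:
  assumes "N \<ge> 1" "i \<in> {1..N}" "1 \<le> \<nu>" "\<nu> \<le> k - 1"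
  shows "q k N i \<nu> \<in> S2 k N"
  unfolding S2_def
proof (intro CollectI conjI allI)
  show "q k N i \<nu> \<in> Vh k N" by (rule q_in_Vh[OF assms])
  fix m
  show "q k N i \<nu> (node N m) = 0"
  proof (rule periodic1_node_eq_0[OF assms(1) periodic1_q])
    fix j assume j: "j \<in> {1..N}"
    have x: "node N (int j) \<in> cell N j"
      using assms(1) by (auto simp: node_def divide_right_mono)
    have e: "node N (int j) * real N = real j" using assms(1) by (simp add: node_def)
    show "q k N i \<nu> (node N (int j)) = 0" unfolding q_on_cell[OF assms(1,2) j x] e by (simp add: phi_def)
  qed
qed

lemma node_succ: "N \<ge> 1 \<Longrightarrow> node N (int j) = node N (int j - 1) + 1 / real N"
  by (simp add: node_def field_simps)

lemma ex_cell_containing: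
  assumes "N \<ge> 1" "x \<in> {0..1}"
  shows "\<exists>j\<in>{1..N}. x \<in> cell N j"
proof -
  have N: "real N > 0" using assms(1) by simp
  define y where "y = x * real N"
  have y: "0 \<le> y" "y \<le> real N" using assms(2) N unfolding y_def by (auto simp: mult_left_le_one_le)
  define j where "j = max 1 (nat \<lceil>y\<rceil>)"
  have jN: "j \<in> {1..N}" unfolding j_def using y assms(1) by (auto simp: nat_le_iff ceiling_le_iff)
  have "real j - 1 \<le> y \<and> y \<le> real j"
  proof (cases "\<lceil>y\<rceil> \<ge> 1")
    case True
    then have "j = nat \<lceil>y\<rceil>" unfolding j_def by (simp add: max_def Suc_le_eq)
    then have "real j = of_int \<lceil>y\<rceil>" using True by simp
    then show ?thesis using ceiling_correct[of y] by linarith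
  next
    case False
    then have "y = 0" using y by (metis ceiling_le_zero less_eq_real_def not_le zero_less_ceiling zero_less_one int_one_le_iff_zero_less)
    then show ?thesis unfolding j_def using False by auto
  qed
  then have "x \<in> cell N j"
    unfolding node_def y_def using N by (auto simp: field_simps)
  then show ?thesis using jN by blast
qed

lemma integral_cell_rescale:
  assumes "N \<ge> 1" "continuous_on UNIV F"
  shows "integral (cell N j) F = integral {0..1} (\<lambda>t. F (node N (int j - 1) + t / real N)) / real N"
proof -
  have "integral (cell N j) F = integral {node N (int j - 1)..node N (int j - 1) + 1 / real N} F"
    using node_succ[OF assms(1)] by simp
  also have "\<dots> = 1 / real N * integral {0..1} (\<lambda>t. F (node N (int j - 1) + 1 / real N * t))"
    by (rule integral_rescale_01) (use assms in auto)
  finally show ?thesis by (simp add: mult.commute)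
qed

lemma cell_point:
  assumes "N \<ge> 1" "t \<in> {0..1}"
  shows "node N (int j - 1) + t / real N \<in> cell N j"
    and "(node N (int j - 1) + t / real N) * real N - (real j - 1) = t"
  using assms by (auto simp: node_def field_simps)

lemma Vh_on_cell_eq_rescaled_poly:
  assumes "N \<ge> 1" "s \<in> Vh k N" "j \<in> {1..N}"
  obtains r where "degree r \<le> k" "\<And>x. x \<in> cell N j \<Longrightarrow> s x = poly r (x * real N - (real j - 1))"
    "poly r 0 = s (node N (int j - 1))" "poly r 1 = s (node N (int j))"
    "integral {0..1} (\<lambda>t. (poly r t)\<^sup>2) = real N * integral (cell N j) (\<lambda>x. (s x)\<^sup>2)"
proof -
  obtain W where W: "degree W \<le> k" "\<And>x. x \<in> cell N j \<Longrightarrow> s x = poly W x"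
    using Vh_piece[OF assms(2,3)] by blast
  define r where "r = pcompose W [:node N (int j - 1), 1 / real N:]"
  have r: "poly r t = poly W (node N (int j - 1) + t / real N)" for t
    unfolding r_def by (simp add: poly_pcompose)
  have "degree r \<le> k" using degree_pcompose_linear_le W(1) unfolding r_def by (rule order.trans)
  moreover have "s x = poly r (x * real N - (real j - 1))" if "x \<in> cell N j" for x
    using W(2)[OF that] assms(1) unfolding r by (simp add: node_def field_simps)
  moreover have "poly r 0 = s (node N (int j - 1))" "poly r 1 = s (node N (int j))"
    using W(2) cell_point(1)[OF assms(1), of 0 j] cell_point(1)[OF assms(1), of 1 j]
      node_succ[OF assms(1), of j] unfolding r by auto
  moreover have "integral {0..1} (\<lambda>t. (poly r t)\<^sup>2) = real N * integral (cell N j) (\<lambda>x. (s x)\<^sup>2)"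
  proof -
    have "integral (cell N j) (\<lambda>x. (s x)\<^sup>2) = integral {0..1} (\<lambda>t. (poly r t)\<^sup>2) / real N"
      unfolding integral_cell_rescale[OF assms(1) continuous_on_power[OF Vh_continuous[OF assms(2)]]]
      by (intro arg_cong[where f = "\<lambda>I. I / real N"] integral_cong)
        (simp add: r W(2)[OF cell_point(1)[OF assms(1)]])
    then show ?thesis using assms(1) by simp
  qed
  ultimately show ?thesis using that by blast
qed

lemma sum_integral_cells_eq_ip:
  assumes "N \<ge> 1" "continuous_on UNIV s"
  shows "(\<Sum>j\<in>{1..N}. integral (cell N j) (\<lambda>x. (s x)\<^sup>2)) = ip s s"
  using integral_01_eq_sum_cells[OF _ assms(1), of "\<lambda>x. (s x)\<^sup>2"] ip_continuous_eq_integral[OF assms(2,2)]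
  by (simp add: power2_eq_square continuous_intros assms(2))

lemma integral_psi_reflect_mult_poly_vanishing_at_0_1:
  assumes "k \<ge> 1" "degree r \<le> k" "poly r 0 = 0" "poly r 1 = 0"
  shows "integral {0..1} (\<lambda>t. psi k (1 - t) * poly r t) = 0"
proof -
  define r' where "r' = pcompose r [:1, -1:]"
  have r': "poly r' t = poly r (1 - t)" for t unfolding r'_def by (simp add: poly_pcompose)
  have "degree r' \<le> k"
    using degree_pcompose_linear_le assms(2) unfolding r'_def by (rule order.trans)
  moreover have "poly r' 0 = 0" "poly r' 1 = 0" using assms(3,4) by (simp_all add: r')
  ultimately have "integral {0..1} (\<lambda>t. psi k t * poly r' t) = 0"
    by (intro integral_psi_mult_poly_vanishing_at_0_1 assms(1))
  moreover have "integral {0..1} (\<lambda>t. psi k (1 - t) * poly r' (1 - t)) = integral {0..1} (\<lambda>t. psi k t * poly r' t)"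
    by (rule integral_reflect_01) (intro continuous_intros continuous_on_psi)
  ultimately show ?thesis by (simp add: r')
qed

lemma integral_cell_ell_mult_S2_eq_0:
  assumes "N \<ge> 1" "k \<ge> 1" "i \<in> {1..N}" "j \<in> {1..N}" "w \<in> S2 k N"
  shows "integral (cell N j) (\<lambda>x. ell k N i x * w x) = 0"
proof -
  have wV: "w \<in> Vh k N" using assms(5) unfolding S2_def by blast
  obtain r where r: "degree r \<le> k" "\<And>x. x \<in> cell N j \<Longrightarrow> w x = poly r (x * real N - (real j - 1))"
    "poly r 0 = w (node N (int j - 1))" "poly r 1 = w (node N (int j))"
    using Vh_on_cell_eq_rescaled_poly[OF assms(1) wV assms(4)] by blast
  then have r01: "poly r 0 = 0" "poly r 1 = 0" using assms(5) unfolding S2_def by auto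
  define A where "A = (if i = j then 1 else 0 :: real)"
  define B where "B = (if int i = int j - 1 \<or> (i = N \<and> j = 1) then 1 else 0 :: real)"
  have pointwise: "ell k N i x * w x = A * (psi k t * poly r t) + B * (psi k (1 - t) * poly r t)"
    if "t \<in> {0..1}" "x = node N (int j - 1) + t / real N" for t x
  proof -
    have x: "x \<in> cell N j" and "x * real N - (real j - 1) = t"
      using cell_point[OF assms(1) that(1)] that(2) by auto
    then have coords: "x * real N - (real j - 1) = t" "real j - x * real N = 1 - t" by simp_all
    show ?thesis
      unfolding ell_on_cell[OF assms(1-4) x] r(2)[OF x] coords A_def B_def by (simp add: algebra_simps)
  qed
  have "integral (cell N j) (\<lambda>x. ell k N i x * w x)
      = integral {0..1} (\<lambda>t. A * (psi k t * poly r t) + B * (psi k (1 - t) * poly r t)) / real N"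
    unfolding integral_cell_rescale[OF assms(1)
        continuous_on_mult[OF continuous_on_ell[OF assms(1-3)] Vh_continuous[OF wV]]]
    by (intro arg_cong[where f = "\<lambda>I. I / real N"] integral_cong) (simp add: pointwise)
  also have "\<dots> = 0"
    using integral_psi_mult_poly_vanishing_at_0_1[OF assms(2) r(1) r01]
      integral_psi_reflect_mult_poly_vanishing_at_0_1[OF assms(2) r(1) r01]
    by (subst integral_add) (auto intro!: integrable_continuous_interval continuous_intros simp: psi_def)
  finally show ?thesis .
qed

lemma ip_ell_S2_eq_0:
  assumes "N \<ge> 1" "k \<ge> 1" "i \<in> {1..N}" "w \<in> S2 k N"
  shows "ip (ell k N i) w = 0"
proof -
  have cw: "continuous_on UNIV w" and ce: "continuous_on UNIV (ell k N i)"
    using assms Vh_continuous continuous_on_ell unfolding S2_def by auto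
  have "ip (ell k N i) w = integral {0..1} (\<lambda>x. ell k N i x * w x)"
    by (rule ip_continuous_eq_integral[OF ce cw])
  also have "\<dots> = (\<Sum>j\<in>{1..N}. integral (cell N j) (\<lambda>x. ell k N i x * w x))"
    by (rule integral_01_eq_sum_cells[OF _ assms(1)]) (intro continuous_intros ce cw)
  also have "\<dots> = 0" using integral_cell_ell_mult_S2_eq_0[OF assms(1-3) _ assms(4)] by simp
  finally show ?thesis .
qed

section \<open>The spaces \<open>S\<^sub>h\<^sup>1\<close> and \<open>S\<^sub>h\<^sup>2\<close>\<close>

lemma S1_continuous_periodic1: "f \<in> S1 k N \<Longrightarrow> continuous_on UNIV f \<and> periodic1 f"
  unfolding S1_def using Vh_continuous Vh_periodic1 by blast

lemma S2_continuous_periodic1: "f \<in> S2 k N \<Longrightarrow> continuous_on UNIV f \<and> periodic1 f"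
  unfolding S2_def using Vh_continuous Vh_periodic1 by blast

lemma S2_diff: "f \<in> S2 k N \<Longrightarrow> g \<in> S2 k N \<Longrightarrow> (\<lambda>x. f x - g x) \<in> S2 k N"
  unfolding S2_def using Vh_diff by auto

lemma S1_diff:
  assumes "f \<in> S1 k N" "g \<in> S1 k N" shows "(\<lambda>x. f x - g x) \<in> S1 k N"
proof -
  have "ip (\<lambda>x. f x - g x) u = 0" if u: "u \<in> S2 k N" for u
    using ip_diff_left[of f g u] assms u S1_continuous_periodic1 S2_continuous_periodic1 L2_continuous
    unfolding S1_def by auto
  then show ?thesis using assms Vh_diff unfolding S1_def by auto
qed

lemma ell_sum_in_S1:
  assumes "N \<ge> 1" "k \<ge> 1"
  shows "(\<lambda>x. \<Sum>j\<in>{1..N}. c j * ell k N j x) \<in> S1 k N"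
proof -
  have "ip (\<lambda>x. \<Sum>j\<in>{1..N}. c j * ell k N j x) u = 0" if "u \<in> S2 k N" for u
    using that ip_ell_S2_eq_0[OF assms] S2_continuous_periodic1 L2_continuous continuous_on_ell[OF assms]
    by (subst ip_sum_left) auto
  then show ?thesis unfolding S1_def using Vh_sum ell_in_Vh[OF assms] by blast
qed

lemma ell_in_S1:
  assumes "N \<ge> 1" "k \<ge> 1" "i \<in> {1..N}"
  shows "ell k N i \<in> S1 k N"
  unfolding S1_def using ell_in_Vh[OF assms] ip_ell_S2_eq_0[OF assms] by blast

lemma S1_eq_ell_interpolant:
  assumes "N \<ge> 1" "k \<ge> 1" "s \<in> S1 k N" "x \<in> {0..1}"
  shows "s x = (\<Sum>i\<in>{1..N}. s (node N (int i)) / psi k 1 * ell k N i x)"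
proof -
  define w where "w = (\<lambda>x. s x - (\<Sum>i\<in>{1..N}. s (node N (int i)) / psi k 1 * ell k N i x))"
  have wS1: "w \<in> S1 k N" unfolding w_def by (intro S1_diff assms(3) ell_sum_in_S1 assms(1,2))
  have "w (node N (int j)) = 0" if "j \<in> {1..N}" for j
  proof -
    have "(\<Sum>i\<in>{1..N}. s (node N (int i)) / psi k 1 * ell k N i (node N (int j)))
        = s (node N (int j)) / psi k 1 * psi k 1"
      using that by (simp add: ell_at_node[OF assms(1,2) _ that] if_distrib cong: if_cong)
    then show ?thesis unfolding w_def using psi_1_neq_0[OF assms(2)] by simp
  qed
  then have "w \<in> S2 k N"
    using wS1 periodic1_node_eq_0[OF assms(1)] S1_continuous_periodic1 unfolding S2_def S1_def by blast
  then have "ip w w = 0" using wS1 unfolding S1_def by blast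
  then have "w x = 0" using continuous_ip_self_eq_0_imp S1_continuous_periodic1[OF wS1] assms(4) by blast
  then show ?thesis unfolding w_def by simp
qed

lemma Vh_nodal_values_bound:
  "\<exists>K\<ge>0. \<forall>N\<ge>1. \<forall>s\<in>Vh k N. (\<Sum>j\<in>{1..N}. (s (node N (int j)))\<^sup>2) \<le> K * real N * ip s s"
proof -
  obtain K where K: "K \<ge> 0" "\<And>r::real poly. degree r \<le> k \<Longrightarrow> (poly r 1)\<^sup>2 \<le> K * integral {0..1} (\<lambda>t. (poly r t)\<^sup>2)"
    using poly_at_1_sq_le_integral[of k] by blast
  show ?thesis
  proof (intro exI[of _ K] conjI allI impI ballI)
    fix N :: nat and s assume N: "N \<ge> 1" and s: "s \<in> Vh k N"
    have "(s (node N (int j)))\<^sup>2 \<le> K * real N * integral (cell N j) (\<lambda>x. (s x)\<^sup>2)" if j: "j \<in> {1..N}" for j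
    proof -
      obtain r where "degree r \<le> k" "poly r 1 = s (node N (int j))"
        "integral {0..1} (\<lambda>t. (poly r t)\<^sup>2) = real N * integral (cell N j) (\<lambda>x. (s x)\<^sup>2)"
        using Vh_on_cell_eq_rescaled_poly[OF N s j] by metis
      then show ?thesis using K(2) by (metis mult.assoc)
    qed
    then have "(\<Sum>j\<in>{1..N}. (s (node N (int j)))\<^sup>2) \<le> (\<Sum>j\<in>{1..N}. K * real N * integral (cell N j) (\<lambda>x. (s x)\<^sup>2))"
      by (rule sum_mono)
    also have "\<dots> = K * real N * ip s s"
      using sum_integral_cells_eq_ip[OF N Vh_continuous[OF s]] by (simp add: sum_distrib_left[symmetric])
    finally show "(\<Sum>j\<in>{1..N}. (s (node N (int j)))\<^sup>2) \<le> K * real N * ip s s" .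
  qed (use K in simp)
qed

lemma q_sum_in_S2:
  assumes "N \<ge> 1"
  shows "(\<lambda>x. \<Sum>p\<in>{1..N}\<times>{1..k-1}. c p * q k N (fst p) (snd p) x) \<in> S2 k N"
proof -
  have "(\<lambda>x. \<Sum>p\<in>{1..N}\<times>{1..k-1}. c p * q k N (fst p) (snd p) x) \<in> Vh k N"
    using q_in_Vh[OF assms] by (intro Vh_sum) auto
  moreover have "q k N i \<nu> (node N m) = 0" if "i \<in> {1..N}" "\<nu> \<in> {1..k-1}" for i \<nu> m
    using q_in_S2[OF assms] that unfolding S2_def by auto
  ultimately show ?thesis unfolding S2_def by (auto intro!: sum.neutral)
qed

lemma sum_q_on_cell:
  assumes "N \<ge> 1" "j \<in> {1..N}" "x \<in> cell N j"
  shows "(\<Sum>p\<in>{1..N}\<times>{1..k-1}. c p * q k N (fst p) (snd p) x)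
    = (\<Sum>\<nu>\<in>{1..k-1}. c (j, \<nu>) * phi k \<nu> (x * real N - (real j - 1)))"
proof -
  have "(\<Sum>p\<in>{1..N}\<times>{1..k-1}. c p * q k N (fst p) (snd p) x)
      = (\<Sum>i\<in>{1..N}. \<Sum>\<nu>\<in>{1..k-1}. c (i, \<nu>) * q k N i \<nu> x)"
    by (simp add: sum.cartesian_product split_def)
  also have "\<dots> = (\<Sum>i\<in>{1..N}. if i = j then \<Sum>\<nu>\<in>{1..k-1}. c (j, \<nu>) * phi k \<nu> (x * real N - (real j - 1)) else 0)"
    by (rule sum.cong[OF refl]) (simp add: q_on_cell[OF assms(1) _ assms(2,3)])
  finally show ?thesis using assms(2) by simp
qed

lemma S2_cell_phi_expansion:
  assumes ref: "\<And>r::real poly. degree r \<le> k \<and> poly r 0 = 0 \<and> poly r 1 = 0 \<Longrightarrow>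
      \<exists>c. (\<forall>t\<in>{0..1}. poly r t = (\<Sum>\<nu>\<in>{1..k-1}. c \<nu> * phi k \<nu> t)) \<and>
        (\<Sum>\<nu>\<in>{1..k-1}. (c \<nu>)\<^sup>2) \<le> K * integral {0..1} (\<lambda>t. (poly r t)\<^sup>2)"
    and N: "N \<ge> 1" and w: "w \<in> S2 k N" and j: "j \<in> {1..N}"
  shows "\<exists>c. (\<forall>x\<in>cell N j. w x = (\<Sum>\<nu>\<in>{1..k-1}. c \<nu> * phi k \<nu> (x * real N - (real j - 1)))) \<and>
    (\<Sum>\<nu>\<in>{1..k-1}. (c \<nu>)\<^sup>2) \<le> K * real N * integral (cell N j) (\<lambda>x. (w x)\<^sup>2)"
proof -
  obtain r where r: "degree r \<le> k" "\<And>x. x \<in> cell N j \<Longrightarrow> w x = poly r (x * real N - (real j - 1))"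
    "poly r 0 = w (node N (int j - 1))" "poly r 1 = w (node N (int j))"
    "integral {0..1} (\<lambda>t. (poly r t)\<^sup>2) = real N * integral (cell N j) (\<lambda>x. (w x)\<^sup>2)"
    using Vh_on_cell_eq_rescaled_poly[OF N _ j, of w k] w unfolding S2_def by blast
  have "poly r 0 = 0" "poly r 1 = 0" using r(3,4) w unfolding S2_def by auto
  then obtain c where c: "\<forall>t\<in>{0..1}. poly r t = (\<Sum>\<nu>\<in>{1..k-1}. c \<nu> * phi k \<nu> t)"
    "(\<Sum>\<nu>\<in>{1..k-1}. (c \<nu>)\<^sup>2) \<le> K * integral {0..1} (\<lambda>t. (poly r t)\<^sup>2)"
    using ref[of r] r(1) by blast
  have "w x = (\<Sum>\<nu>\<in>{1..k-1}. c \<nu> * phi k \<nu> (x * real N - (real j - 1)))" if x: "x \<in> cell N j" for x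
  proof -
    have "x * real N - (real j - 1) \<in> {0..1}" using cell_bounds[OF N x] by simp
    then show ?thesis using r(2)[OF x] c(1) by simp
  qed
  moreover have "(\<Sum>\<nu>\<in>{1..k-1}. (c \<nu>)\<^sup>2) \<le> K * real N * integral (cell N j) (\<lambda>x. (w x)\<^sup>2)"
    using c(2) r(5) by (simp add: mult.assoc)
  ultimately show ?thesis by blast
qed

lemma S2_stable_q_expansion:
  "\<exists>K\<ge>0. \<forall>N\<ge>1. \<forall>w\<in>S2 k N. \<exists>c.
     (\<forall>x\<in>{0..1}. w x = (\<Sum>p\<in>{1..N}\<times>{1..k-1}. c p * q k N (fst p) (snd p) x)) \<and>
     (\<Sum>p\<in>{1..N}\<times>{1..k-1}. (c p)\<^sup>2) \<le> K * real N * ip w w"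
proof -
  obtain K where K: "K \<ge> 0" "\<And>r::real poly. degree r \<le> k \<and> poly r 0 = 0 \<and> poly r 1 = 0 \<Longrightarrow>
    (\<exists>c. (\<forall>t\<in>{0..1}. poly r t = (\<Sum>\<nu>\<in>{1..k-1}. c \<nu> * phi k \<nu> t)) \<and>
         (\<Sum>\<nu>\<in>{1..k-1}. (c \<nu>)\<^sup>2) \<le> K * integral {0..1} (\<lambda>t. (poly r t)\<^sup>2))"
    using phi_coeffs_of_poly_vanishing_at_0_1[of k] by blast
  show ?thesis
  proof (intro exI[of _ K] conjI allI impI ballI)
    fix N :: nat and w assume N: "N \<ge> 1" and w: "w \<in> S2 k N"
    have "\<forall>j\<in>{1..N}. \<exists>C. (\<forall>x\<in>cell N j. w x = (\<Sum>\<nu>\<in>{1..k-1}. C \<nu> * phi k \<nu> (x * real N - (real j - 1)))) \<and>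
       (\<Sum>\<nu>\<in>{1..k-1}. (C \<nu>)\<^sup>2) \<le> K * real N * integral (cell N j) (\<lambda>x. (w x)\<^sup>2)"
      using S2_cell_phi_expansion[OF K(2) N w] by blast
    from bchoice[OF this] obtain C where C: "\<And>j. j \<in> {1..N} \<Longrightarrow>
       (\<forall>x\<in>cell N j. w x = (\<Sum>\<nu>\<in>{1..k-1}. C j \<nu> * phi k \<nu> (x * real N - (real j - 1)))) \<and>
       (\<Sum>\<nu>\<in>{1..k-1}. (C j \<nu>)\<^sup>2) \<le> K * real N * integral (cell N j) (\<lambda>x. (w x)\<^sup>2)"
      by blast
    show "\<exists>c. (\<forall>x\<in>{0..1}. w x = (\<Sum>p\<in>{1..N}\<times>{1..k-1}. c p * q k N (fst p) (snd p) x)) \<and>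
      (\<Sum>p\<in>{1..N}\<times>{1..k-1}. (c p)\<^sup>2) \<le> K * real N * ip w w"
    proof (intro exI[of _ "\<lambda>p. C (fst p) (snd p)"] conjI ballI)
      fix x :: real assume "x \<in> {0..1}"
      then obtain j where "j \<in> {1..N}" "x \<in> cell N j" using ex_cell_containing[OF N] by blast
      then show "w x = (\<Sum>p\<in>{1..N}\<times>{1..k-1}. C (fst p) (snd p) * q k N (fst p) (snd p) x)"
        using C sum_q_on_cell[OF N, of j x "\<lambda>p. C (fst p) (snd p)"] by simp
    next
      have "(\<Sum>p\<in>{1..N}\<times>{1..k-1}. (C (fst p) (snd p))\<^sup>2) = (\<Sum>i\<in>{1..N}. \<Sum>\<nu>\<in>{1..k-1}. (C i \<nu>)\<^sup>2)"
        by (simp add: sum.cartesian_product split_def)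
      also have "\<dots> \<le> (\<Sum>i\<in>{1..N}. K * real N * integral (cell N i) (\<lambda>x. (w x)\<^sup>2))"
        using C by (intro sum_mono) blast
      also have "\<dots> = K * real N * ip w w"
        using sum_integral_cells_eq_ip[OF N S2_continuous_periodic1[OF w, THEN conjunct1]]
        by (simp add: sum_distrib_left[symmetric])
      finally show "(\<Sum>p\<in>{1..N}\<times>{1..k-1}. (C (fst p) (snd p))\<^sup>2) \<le> K * real N * ip w w" .
    qed
  qed (use K in simp)
qed

section \<open>Bounds for the projections\<close>

lemma pi1_norm_le:
  assumes "k \<ge> 1"
  shows "\<exists>K\<ge>0. \<forall>N\<ge>1. \<forall>v B. L2 v \<longrightarrow> B \<ge> 0 \<longrightarrow> (\<forall>i\<in>{1..N}. \<bar>ip v (ell k N i)\<bar> \<le> B) \<longrightarrow>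
    l2norm (pi1 k N v) \<le> K * B * real N"
proof -
  obtain K1 where K1: "K1 \<ge> 0" "\<And>N s. N \<ge> 1 \<Longrightarrow> s \<in> Vh k N \<Longrightarrow>
      (\<Sum>j\<in>{1..N}. (s (node N (int j)))\<^sup>2) \<le> K1 * real N * ip s s"
    using Vh_nodal_values_bound[of k] by blast
  define ps where "ps = \<bar>psi k 1\<bar>"
  have ps: "ps > 0" unfolding ps_def using psi_1_neq_0[OF assms] by simp
  show ?thesis
  proof (intro exI[of _ "sqrt K1 / ps"] conjI allI impI)
    fix N :: nat and v B
    assume N: "N \<ge> 1" and v: "L2 v" and B: "B \<ge> 0" and hyp: "\<forall>i\<in>{1..N}. \<bar>ip v (ell k N i)\<bar> \<le> B"
    have Lell: "\<And>i. i \<in> {1..N} \<Longrightarrow> L2 (ell k N i)" using continuous_on_ell[OF N assms] L2_continuous by blast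
    define p where "p = pi1 k N v"
    have span: "\<exists>e. \<forall>x\<in>{0..1}. w x = (\<Sum>j\<in>{1..N}. e j * ell k N j x)" if "w \<in> S1 k N" for w
      using S1_eq_ell_interpolant[OF N assms that]
      by (intro exI[of _ "\<lambda>i. w (node N (int i)) / psi k 1"]) simp
    have "p \<in> S1 k N \<and> ip v p = ip p p"
      unfolding p_def pi1_def
      by (rule l2proj_finite_span[where I = "{1..N}" and g = "ell k N"])
        (assumption | rule S1_continuous_periodic1 S1_diff finite_atLeastAtMost ell_in_S1[OF N assms]
          ell_sum_in_S1[OF N assms] span v)+
    then have p: "p \<in> S1 k N" "ip v p = ip p p" by simp_all
    have "(\<Sum>i\<in>{1..N}. (p (node N (int i)) / psi k 1)\<^sup>2) * real (card {1..N})
        = (\<Sum>i\<in>{1..N}. (p (node N (int i)))\<^sup>2) * real N / ps\<^sup>2"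
      by (simp add: ps_def power_divide sum_divide_distrib[symmetric])
    also have "\<dots> \<le> K1 * real N * ip p p * real N / ps\<^sup>2"
      using K1(2)[OF N] p(1) unfolding S1_def by (intro divide_right_mono mult_right_mono) auto
    also have "\<dots> = (real N * K1 * real N / ps\<^sup>2) * ip p p" by simp
    finally have "l2norm p \<le> B * sqrt (real N * K1 * real N / ps\<^sup>2)"
      using B K1(1) hyp S1_eq_ell_interpolant[OF N assms p(1)]
      by (intro l2norm_le_of_expansion[where d = "\<lambda>i. p (node N (int i)) / psi k 1",
            OF finite_atLeastAtMost Lell v p(2)]) auto
    also have "\<dots> = sqrt K1 / ps * B * real N"
      using ps K1(1) by (simp add: real_sqrt_mult real_sqrt_divide)
    finally show "l2norm (pi1 k N v) \<le> sqrt K1 / ps * B * real N" unfolding p_def .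
  qed (use K1 ps in simp)
qed

lemma pi2_norm_le:
  "\<exists>K\<ge>0. \<forall>N\<ge>1. \<forall>v B. L2 v \<longrightarrow> B \<ge> 0 \<longrightarrow>
    (\<forall>i\<in>{1..N}. \<forall>m\<in>{1..k-1}. \<bar>ip v (q k N i m)\<bar> \<le> B) \<longrightarrow> l2norm (pi2 k N v) \<le> K * B * real N"
proof -
  let ?q = "\<lambda>N p. q k N (fst p) (snd p)"
  obtain K2 where K2: "K2 \<ge> 0" "\<And>N w. N \<ge> 1 \<Longrightarrow> w \<in> S2 k N \<Longrightarrow> \<exists>c.
     (\<forall>x\<in>{0..1}. w x = (\<Sum>p\<in>{1..N}\<times>{1..k-1}. c p * ?q N p x)) \<and>
     (\<Sum>p\<in>{1..N}\<times>{1..k-1}. (c p)\<^sup>2) \<le> K2 * real N * ip w w"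
    using S2_stable_q_expansion[of k] by blast
  show ?thesis
  proof (intro exI[of _ "sqrt (real (k - 1) * K2)"] conjI allI impI)
    fix N :: nat and v B
    assume N: "N \<ge> 1" and v: "L2 v" and B: "B \<ge> 0"
      and hyp: "\<forall>i\<in>{1..N}. \<forall>m\<in>{1..k-1}. \<bar>ip v (q k N i m)\<bar> \<le> B"
    let ?I = "{1..N} \<times> {1..k-1}"
    have qS2: "\<And>p. p \<in> ?I \<Longrightarrow> ?q N p \<in> S2 k N" using q_in_S2[OF N] by auto
    have Lq: "\<And>p. p \<in> ?I \<Longrightarrow> L2 (?q N p)"
      using qS2 S2_continuous_periodic1 L2_continuous by blast
    define p where "p = pi2 k N v"
    have span: "\<exists>e. \<forall>x\<in>{0..1}. w x = (\<Sum>j\<in>?I. e j * ?q N j x)" if "w \<in> S2 k N" for w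
      using K2(2)[OF N that] by (elim exE conjE) (rule exI)
    have "p \<in> S2 k N \<and> ip v p = ip p p"
      unfolding p_def pi2_def
      by (rule l2proj_finite_span[where I = ?I and g = "?q N"])
        (assumption | rule S2_continuous_periodic1 S2_diff finite_SigmaI finite_atLeastAtMost qS2
          q_sum_in_S2[OF N] span v)+
    then have p: "p \<in> S2 k N" "ip v p = ip p p" by simp_all
    obtain d where d: "\<forall>x\<in>{0..1}. p x = (\<Sum>j\<in>?I. d j * ?q N j x)"
      "(\<Sum>j\<in>?I. (d j)\<^sup>2) \<le> K2 * real N * ip p p"
      using K2(2)[OF N p(1)] by blast
    have "(\<Sum>j\<in>?I. (d j)\<^sup>2) * real (card ?I) \<le> (K2 * real N * ip p p) * (real N * real (k - 1))"
      using d(2) by (simp add: card_cartesian_product mult_right_mono)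
    then have "l2norm p \<le> B * sqrt (real N * real (k - 1) * K2 * real N)"
      using hyp K2(1) B
      by (intro l2norm_le_of_expansion[OF _ Lq v p(2) d(1)]) (auto simp: algebra_simps)
    also have "\<dots> = sqrt (real (k - 1) * K2) * B * real N"
      using K2(1) by (simp add: real_sqrt_mult)
    finally show "l2norm (pi2 k N v) \<le> sqrt (real (k - 1) * K2) * B * real N" unfolding p_def .
  qed (use K2 in simp)
qed

lemma mult_powr_shift_le:
  fixes K C :: real
  assumes "N \<ge> 1" "K \<ge> 0" "C > 0"
  shows "K * (C * (1 / real N) powr a) * real N \<le> (C * K + 1) * (1 / real N) powr (a - 1)"
proof -
  have "(1 / real N) powr (a - 1) = (1 / real N) powr a * real N"
    using assms(1) by (simp add: powr_diff)
  then have "K * (C * (1 / real N) powr a) * real N = C * K * (1 / real N) powr (a - 1)" by simp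
  moreover have "0 \<le> (1 / real N) powr (a - 1)" by simp
  ultimately show ?thesis unfolding distrib_right by linarith
qed

theorem lemma2p5:
  fixes \<kappa> :: nat and C1 C2 \<alpha> \<beta> :: real
  assumes "C1 > 0" and "C2 > 0" and "\<alpha> > 0" and "\<beta> > 0"
  shows "\<exists>Ct1 > 0. \<exists>Ct2 > 0. \<forall>N::nat. N \<ge> 1 \<longrightarrow>
    (\<forall>v :: real \<Rightarrow> real. v \<in> borel_measurable lborel \<longrightarrow> periodic1 v \<longrightarrow>
       set_integrable lborel {0..1} (\<lambda>x. (v x)\<^sup>2) \<longrightarrow>
       ((\<forall>i\<in>{1..N}. \<bar>ip v (ell (2*\<kappa>+1) N i)\<bar> \<le> C1 * (1 / real N) powr \<alpha>)
          \<longrightarrow> l2norm (pi1 (2*\<kappa>+1) N v) \<le> Ct1 * (1 / real N) powr (\<alpha> - 1)) \<and>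
       ((\<forall>i\<in>{1..N}. \<forall>m\<in>{1..2*\<kappa>}. \<bar>ip v (q (2*\<kappa>+1) N i m)\<bar> \<le> C2 * (1 / real N) powr \<beta>)
          \<longrightarrow> l2norm (pi2 (2*\<kappa>+1) N v) \<le> Ct2 * (1 / real N) powr (\<beta> - 1)))"
proof -
  define k where "k = 2 * \<kappa> + 1"
  have k: "k \<ge> 1" "{1..2 * \<kappa>} = {1..k - 1}" unfolding k_def by auto
  obtain K1 where K1: "K1 \<ge> 0" "\<And>N v B. N \<ge> 1 \<Longrightarrow> L2 v \<Longrightarrow> B \<ge> 0 \<Longrightarrow>
      \<forall>i\<in>{1..N}. \<bar>ip v (ell k N i)\<bar> \<le> B \<Longrightarrow> l2norm (pi1 k N v) \<le> K1 * B * real N"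
    using pi1_norm_le[OF k(1)] by blast
  obtain K2 where K2: "K2 \<ge> 0" "\<And>N v B. N \<ge> 1 \<Longrightarrow> L2 v \<Longrightarrow> B \<ge> 0 \<Longrightarrow>
      \<forall>i\<in>{1..N}. \<forall>m\<in>{1..k-1}. \<bar>ip v (q k N i m)\<bar> \<le> B \<Longrightarrow> l2norm (pi2 k N v) \<le> K2 * B * real N"
    using pi2_norm_le[of k] by blast
  have "l2norm (pi1 k N v) \<le> (C1 * K1 + 1) * (1 / real N) powr (\<alpha> - 1)"
    if "N \<ge> 1" "L2 v" "\<forall>i\<in>{1..N}. \<bar>ip v (ell k N i)\<bar> \<le> C1 * (1 / real N) powr \<alpha>" for N v
    using K1(2)[OF that(1,2) _ that(3)] assms(1) mult_powr_shift_le[OF that(1) K1(1) assms(1), of \<alpha>]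
    by simp
  moreover have "l2norm (pi2 k N v) \<le> (C2 * K2 + 1) * (1 / real N) powr (\<beta> - 1)"
    if "N \<ge> 1" "L2 v" "\<forall>i\<in>{1..N}. \<forall>m\<in>{1..k-1}. \<bar>ip v (q k N i m)\<bar> \<le> C2 * (1 / real N) powr \<beta>"
    for N v
    using K2(2)[OF that(1,2) _ that(3)] assms(2) mult_powr_shift_le[OF that(1) K2(1) assms(2), of \<beta>]
    by simp
  moreover have "C1 * K1 + 1 > 0" "C2 * K2 + 1 > 0" using assms K1(1) K2(1) by (simp_all add: add_nonneg_pos)
  ultimately show ?thesis unfolding k_def[symmetric] k(2) L2_def by blast
qed

end
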